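(* Let $G\subseteq\mathrm{Cl}_n$ with probability distribution $p$ such that $S$ is invertible, let $\Lambda(g)$, $g\in G$, be quantum channels, $O$ a Hermitian observable and $\rho$ a state. Assume that $|s_{a,a'}|/(s_as_{a'})\le C$ for all $a\ne a'$ with $(O|\sigma_a)\ne0$ and $(O|\sigma_{a'})\ne0$. Then $$\bigl|\mathbb{E}(\hat o^2)-\mathbb{E}(\hat o_{\text{noise-free}}^2)\bigr|\le C\lVert O\rVert_{\mathrm{st}}^2\max_{a,b\in\mathbb{F}_2^{2n}}\lVert\mathrm{id}-\bar\Lambda_{a,b}\rVert_\diamond\le C\lVert O\rVert_{\mathrm{st}}^2\max_{g\in G}\lVert\mathrm{id}-\Lambda(g)\rVert_\diamond .$$
   Context: $d=2^n$; $(A|B)=\mathrm{Tr}(A^\dagger B)$; $\omega(g)(A)=gAg^\dagger$, $\omega(g)^\dagger(A)=g^\dagger Ag$; $E_x=|x\rangle\langle x|$, $M=\sum_x|E_x)(E_x|$ with $|A)(B|:C\mapsto(B|C)A$; $S=\sum_g p(g)\omega(g)^\dagger M\omega(g)$. Shadow protocol: $g\sim p$, apply $\omega(g)\Lambda(g)$ to $\rho$, measure computational basis obtaining $x$ with probability $\langle x|\omega(g)\Lambda(g)(\rho)|x\rangle$; estimator $\hat o(g,x)=(O|S^{-1}\omega(g)^\dagger|E_x)$. $\hat o_{\text{noise-free}}$ is the same estimator when $\Lambda(g)=\mathrm{id}$ for all $g$. Pauli operators $\sigma_a$, $a\in\mathbb{F}_2^{2n}$ ($\sigma_{00}=\mathbb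 1,\sigma_{01}=X,\sigma_{11}=Y,\sigma_{10}=Z$ per qubit); $[a,a']=0$ iff $\sigma_a,\sigma_{a'}$ commute, and then $\sigma_a\sigma_{a'}=(-1)^{\beta(a,a')}\sigma_{a+a'}$. $Z_z=\bigotimes_iZ^{z_i}$; for $g\in\mathrm{Cl}_n$, $\Xi_z(g)$ is the Pauli $\sigma_b$ with $g^\dagger Z_zg=\pm\sigma_b$. $s_a=\sum_z\sum_{g\in G:\Xi_z(g)=\sigma_a}p(g)$. For commuting $a,a'$: $r_{a,a'}=\sum_{z,z'\in\mathbb{F}_2^n}\sum_{g\in G:\Xi_z(g)=\sigma_a,\Xi_{z'}(g)=\sigma_{a'}}p(g)$, $s_{a,a'}=(-1)^{\beta(a,a')}r_{a,a'}$, and $\bar\Lambda_{a,a'}=r_{a,a'}^{-1}\sum_{z,z'}\sum_{g\in G:\Xi_z(g)=\sigma_a,\Xi_{z'}(g)=\sigma_{a'}}p(g)\Lambda(g)$ (set $\bar\Lambda_{a,a'}=\mathrm{id}$ if $r_{a,a'}=0$ or $a,a'$ anticommute). Stabilizer norm $\lVert O\rVert_{\mathrm{st}}=d^{-1}\sum_a|(\sigma_a|O)|$; $\lVert\cdot\rVert_\diamond$ diamond norm. *)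

theory Defs
  imports Complex_Main
begin

text \<open>A D x D complex matrix is represented as a function nat => nat => complex
  whose entries outside the block [0,D) x [0,D) are zero. All operations below
  truncate to that block, so they map such matrices to such matrices.\<close>

type_synonym cmat = "nat \<Rightarrow> nat \<Rightarrow> complex"
type_synonym superop = "cmat \<Rightarrow> cmat"

definition mats :: "nat \<Rightarrow> cmat set" where
  "mats D = {A. \<forall>i j. (D \<le> i \<or> D \<le> j) \<longrightarrow> A i j = 0}"

definition mmul :: "nat \<Rightarrow> cmat \<Rightarrow> cmat \<Rightarrow> cmat" where
  "mmul D A B = (\<lambda>i j. if i < D \<and> j < D then (\<Sum>k<D. A i k * B k j) else 0)"

definition adj :: "cmat \<Rightarrow> cmat" where
  "adj A = (\<lambda>i j. cnj (A j i))"

definition smul :: "complex \<Rightarrow> cmat \<Rightarrow> cmat" where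
  "smul c A = (\<lambda>i j. c * A i j)"

definition madd :: "cmat \<Rightarrow> cmat \<Rightarrow> cmat" where
  "madd A B = (\<lambda>i j. A i j + B i j)"

definition idm :: "nat \<Rightarrow> cmat" where
  "idm D = (\<lambda>i j. if i = j \<and> i < D then 1 else 0)"

definition tr :: "nat \<Rightarrow> cmat \<Rightarrow> complex" where
  "tr D A = (\<Sum>i<D. A i i)"

text \<open>Hilbert--Schmidt inner product (A|B) = Tr(A^dagger B).\<close>
definition hs :: "nat \<Rightarrow> cmat \<Rightarrow> cmat \<Rightarrow> complex" where
  "hs D A B = tr D (mmul D (adj A) B)"

definition hermitian :: "nat \<Rightarrow> cmat \<Rightarrow> bool" where
  "hermitian D A \<longleftrightarrow> A \<in> mats D \<and> adj A = A"

definition psd :: "nat \<Rightarrow> cmat \<Rightarrow> bool" where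
  "psd D A \<longleftrightarrow> A \<in> mats D \<and>
     (\<forall>v :: nat \<Rightarrow> complex. let q = (\<Sum>i<D. \<Sum>j<D. cnj (v i) * A i j * v j)
                              in Im q = 0 \<and> Re q \<ge> 0)"

definition is_state :: "nat \<Rightarrow> cmat \<Rightarrow> bool" where
  "is_state D \<rho> \<longleftrightarrow> psd D \<rho> \<and> tr D \<rho> = 1"

definition unitary :: "nat \<Rightarrow> cmat \<Rightarrow> bool" where
  "unitary D U \<longleftrightarrow> U \<in> mats D \<and> mmul D (adj U) U = idm D \<and> mmul D U (adj U) = idm D"

definition vnorm :: "nat \<Rightarrow> (nat \<Rightarrow> complex) \<Rightarrow> real" where
  "vnorm D v = sqrt (\<Sum>i<D. (cmod (v i))\<^sup>2)"

definition mvec :: "nat \<Rightarrow> cmat \<Rightarrow> (nat \<Rightarrow> complex) \<Rightarrow> (nat \<Rightarrow> complex)" where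
  "mvec D A v = (\<lambda>i. if i < D then (\<Sum>k<D. A i k * v k) else 0)"

definition opnorm :: "nat \<Rightarrow> cmat \<Rightarrow> real" where
  "opnorm D A = Sup {vnorm D (mvec D A v) | v. vnorm D v \<le> 1}"

text \<open>Trace norm, as the dual of the operator norm:
  ||X||_1 = sup { |Tr(B^dagger X)| : ||B||_op <= 1 }.\<close>
definition tnorm :: "nat \<Rightarrow> cmat \<Rightarrow> real" where
  "tnorm D X = Sup {cmod (hs D B X) | B. B \<in> mats D \<and> opnorm D B \<le> 1}"

text \<open>Phi tensor id_k on (k*d) x (k*d) matrices. Index convention: row index
  r = (ancilla index) * d + (system index).\<close>
definition block :: "nat \<Rightarrow> cmat \<Rightarrow> nat \<Rightarrow> nat \<Rightarrow> cmat" where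
  "block d X k l = (\<lambda>i j. if i < d \<and> j < d then X (k * d + i) (l * d + j) else 0)"

definition tens_id :: "nat \<Rightarrow> nat \<Rightarrow> superop \<Rightarrow> superop" where
  "tens_id d k \<Phi> X = (\<lambda>r c. if r < k * d \<and> c < k * d
        then \<Phi> (block d X (r div d) (c div d)) (r mod d) (c mod d) else 0)"

definition diamond :: "nat \<Rightarrow> superop \<Rightarrow> real" where
  "diamond d \<Phi> = Sup {tnorm (d * d) (tens_id d d \<Phi> X) | X. X \<in> mats (d * d) \<and> tnorm (d * d) X \<le> 1}"

definition lin_superop :: "nat \<Rightarrow> superop \<Rightarrow> bool" where
  "lin_superop d \<Phi> \<longleftrightarrow> (\<forall>A\<in>mats d. \<Phi> A \<in> mats d) \<and>
     (\<forall>A\<in>mats d. \<forall>B\<in>mats d. \<forall>c. \<Phi> (madd A (smul c B)) = madd (\<Phi> A) (smul c (\<Phi> B)))"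

definition completely_positive :: "nat \<Rightarrow> superop \<Rightarrow> bool" where
  "completely_positive d \<Phi> \<longleftrightarrow>
     (\<forall>k X. psd (k * d) X \<longrightarrow> psd (k * d) (tens_id d k \<Phi> X))"

definition trace_preserving :: "nat \<Rightarrow> superop \<Rightarrow> bool" where
  "trace_preserving d \<Phi> \<longleftrightarrow> (\<forall>A\<in>mats d. tr d (\<Phi> A) = tr d A)"

definition quantum_channel :: "nat \<Rightarrow> superop \<Rightarrow> bool" where
  "quantum_channel d \<Phi> \<longleftrightarrow> lin_superop d \<Phi> \<and> completely_positive d \<Phi> \<and> trace_preserving d \<Phi>"

text \<open>Qubit i corresponds to bit i of a computational basis index.\<close>
definition bitv :: "nat \<Rightarrow> nat \<Rightarrow> nat" where
  "bitv i r = r div 2 ^ i mod 2"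

text \<open>Single-qubit Pauli indexed by (z,x): 00 = 1, 01 = X, 11 = Y, 10 = Z.\<close>
fun pauli1 :: "bool \<times> bool \<Rightarrow> nat \<Rightarrow> nat \<Rightarrow> complex" where
  "pauli1 (False, False) r c = (if r = c then 1 else 0)"
| "pauli1 (False, True) r c = (if r \<noteq> c then 1 else 0)"
| "pauli1 (True, True) r c = (if r = 0 \<and> c = 1 then - \<i> else if r = 1 \<and> c = 0 then \<i> else 0)"
| "pauli1 (True, False) r c = (if r = c then (if r = 0 then 1 else -1) else 0)"

text \<open>Elements of F_2^{2n}: lists of n pairs of bits.\<close>
definition pidx :: "nat \<Rightarrow> (bool \<times> bool) list set" where
  "pidx n = {a. length a = n}"

definition pauli :: "nat \<Rightarrow> (bool \<times> bool) list \<Rightarrow> cmat" where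
  "pauli n a = (\<lambda>r c. if r < 2 ^ n \<and> c < 2 ^ n
       then (\<Prod>i<n. pauli1 (a ! i) (bitv i r) (bitv i c)) else 0)"

definition padd :: "(bool \<times> bool) list \<Rightarrow> (bool \<times> bool) list \<Rightarrow> (bool \<times> bool) list" where
  "padd a b = map2 (\<lambda>(z, x) (z', x'). (z \<noteq> z', x \<noteq> x')) a b"

definition pcommute :: "nat \<Rightarrow> (bool \<times> bool) list \<Rightarrow> (bool \<times> bool) list \<Rightarrow> bool" where
  "pcommute n a b \<longleftrightarrow> mmul (2 ^ n) (pauli n a) (pauli n b) = mmul (2 ^ n) (pauli n b) (pauli n a)"

text \<open>(-1)^{beta(a,a')}: the sign with sigma_a sigma_a' = (-1)^beta sigma_{a+a'}.\<close>
definition beta_sign :: "nat \<Rightarrow> (bool \<times> bool) list \<Rightarrow> (bool \<times> bool) list \<Rightarrow> real" where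
  "beta_sign n a b = (if mmul (2 ^ n) (pauli n a) (pauli n b) = pauli n (padd a b) then 1 else -1)"

definition omega :: "nat \<Rightarrow> cmat \<Rightarrow> superop" where
  "omega D g A = mmul D (mmul D g A) (adj g)"

definition omega_adj :: "nat \<Rightarrow> cmat \<Rightarrow> superop" where
  "omega_adj D g A = mmul D (mmul D (adj g) A) g"

definition clifford :: "nat \<Rightarrow> cmat \<Rightarrow> bool" where
  "clifford n U \<longleftrightarrow> unitary (2 ^ n) U \<and>
     (\<forall>a\<in>pidx n. \<exists>b\<in>pidx n. \<exists>s\<in>{1, -1}. omega (2 ^ n) U (pauli n a) = smul s (pauli n b))"

definition zidx :: "nat \<Rightarrow> bool list set" where
  "zidx n = {z. length z = n}"

definition Zop :: "nat \<Rightarrow> bool list \<Rightarrow> cmat" where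
  "Zop n z = pauli n (map (\<lambda>b. (b, False)) z)"

text \<open>Xi_z(g) = sigma_b with g^dagger Z_z g = +- sigma_b; we record the index b.\<close>
definition Xi :: "nat \<Rightarrow> bool list \<Rightarrow> cmat \<Rightarrow> (bool \<times> bool) list" where
  "Xi n z g = (THE b. b \<in> pidx n \<and>
      (omega_adj (2 ^ n) g (Zop n z) = pauli n b \<or>
       omega_adj (2 ^ n) g (Zop n z) = smul (-1) (pauli n b)))"

definition s1 :: "nat \<Rightarrow> cmat set \<Rightarrow> (cmat \<Rightarrow> real) \<Rightarrow> (bool \<times> bool) list \<Rightarrow> real" where
  "s1 n G p a = (\<Sum>z\<in>zidx n. \<Sum>g\<in>{g\<in>G. Xi n z g = a}. p g)"

definition r2 :: "nat \<Rightarrow> cmat set \<Rightarrow> (cmat \<Rightarrow> real) \<Rightarrow> (bool \<times> bool) list \<Rightarrow> (bool \<times> bool) list \<Rightarrow> real" where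
  "r2 n G p a a' = (\<Sum>z\<in>zidx n. \<Sum>z'\<in>zidx n. \<Sum>g\<in>{g\<in>G. Xi n z g = a \<and> Xi n z' g = a'}. p g)"

definition s2 :: "nat \<Rightarrow> cmat set \<Rightarrow> (cmat \<Rightarrow> real) \<Rightarrow> (bool \<times> bool) list \<Rightarrow> (bool \<times> bool) list \<Rightarrow> real" where
  "s2 n G p a a' = beta_sign n a a' * r2 n G p a a'"

definition Lbar :: "nat \<Rightarrow> cmat set \<Rightarrow> (cmat \<Rightarrow> real) \<Rightarrow> (cmat \<Rightarrow> superop)
                     \<Rightarrow> (bool \<times> bool) list \<Rightarrow> (bool \<times> bool) list \<Rightarrow> superop" where
  "Lbar n G p \<Lambda> a a' = (if r2 n G p a a' = 0 \<or> \<not> pcommute n a a' then id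
     else (\<lambda>A i j. complex_of_real (1 / r2 n G p a a') *
       (\<Sum>z\<in>zidx n. \<Sum>z'\<in>zidx n. \<Sum>g\<in>{g\<in>G. Xi n z g = a \<and> Xi n z' g = a'}.
          complex_of_real (p g) * \<Lambda> g A i j)))"

definition Ex :: "nat \<Rightarrow> cmat" where
  "Ex x = (\<lambda>i j. if i = x \<and> j = x then 1 else 0)"

definition Mmap :: "nat \<Rightarrow> superop" where
  "Mmap D A = (\<lambda>i j. \<Sum>x<D. hs D (Ex x) A * Ex x i j)"

definition Sop :: "nat \<Rightarrow> cmat set \<Rightarrow> (cmat \<Rightarrow> real) \<Rightarrow> superop" where
  "Sop n G p A = (\<lambda>i j. \<Sum>g\<in>G. complex_of_real (p g) *
       omega_adj (2 ^ n) g (Mmap (2 ^ n) (omega (2 ^ n) g A)) i j)"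

definition Sinv :: "nat \<Rightarrow> cmat set \<Rightarrow> (cmat \<Rightarrow> real) \<Rightarrow> superop" where
  "Sinv n G p = inv_into (mats (2 ^ n)) (Sop n G p)"

definition ohat :: "nat \<Rightarrow> cmat set \<Rightarrow> (cmat \<Rightarrow> real) \<Rightarrow> cmat \<Rightarrow> cmat \<Rightarrow> nat \<Rightarrow> complex" where
  "ohat n G p Obs g x = hs (2 ^ n) Obs (Sinv n G p (omega_adj (2 ^ n) g (Ex x)))"

text \<open>Second moment E(o-hat^2): g ~ p, outcome x with probability
  <x| omega(g) Lambda(g) (rho) |x>.\<close>
definition second_moment :: "nat \<Rightarrow> cmat set \<Rightarrow> (cmat \<Rightarrow> real) \<Rightarrow> (cmat \<Rightarrow> superop)
                               \<Rightarrow> cmat \<Rightarrow> cmat \<Rightarrow> complex" where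
  "second_moment n G p \<Lambda> Obs \<rho> = (\<Sum>g\<in>G. complex_of_real (p g) *
      (\<Sum>x<2 ^ n. omega (2 ^ n) g (\<Lambda> g \<rho>) x x * (ohat n G p Obs g x)\<^sup>2))"

definition stab_norm :: "nat \<Rightarrow> cmat \<Rightarrow> real" where
  "stab_norm n Obs = (1 / 2 ^ n) * (\<Sum>a\<in>pidx n. cmod (hs (2 ^ n) (pauli n a) Obs))"

definition superop_diff :: "superop \<Rightarrow> superop \<Rightarrow> superop" where
  "superop_diff \<Phi> \<Psi> = (\<lambda>A i j. \<Phi> A i j - \<Psi> A i j)"

end

theory Submission
  imports Defs "HOL-Analysis.L2_Norm"
begin

text \<open>
  A Clifford g maps every Pauli sigma_a to +-sigma_c, and the measurement channel M keeps
  sigma_c exactly when it is diagonal, i.e. when a = Xi_z(g) for some z. Hence the frame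
  operator is diagonal in the Pauli basis, S sigma_a = s_a sigma_a. Writing E_x as an
  average of the Z_z and inverting S expresses o-hat(g, x) through the coefficients
  F_a = (O|sigma_a) / (d s_a); squaring, the signs cancel and the second moment becomes
  sum over g, z, z' of p(g) F_a F_a' Tr(sigma_a sigma_a' Lambda(g)(rho)) with a = Xi_z(g),
  a' = Xi_z'(g). Grouping the terms by (a, a'), the noisy minus the noise-free moment is
  sum over a, a' of F_a F_a' times -r_{a,a'} Tr((sigma_a sigma_a')^dagger (id - Lbar_{a,a'})(rho)).
  Diagonal pairs vanish by trace preservation, |Tr(W Phi(rho))| <= ||Phi||_diamond for a
  unitary W, and r_{a,a'} / (s_a s_a') = |s_{a,a'}| / (s_a s_a') <= C; summing gives the
  first bound. The second is convexity of the diamond norm, since Lbar_{a,a'} is an average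
  of the Lambda(g).
\<close>

section \<open>Matrix algebra\<close>

lemma mmul_mats [simp]: "mmul D A B \<in> mats D"
  by (auto simp: mats_def mmul_def)

lemma adj_mats: "A \<in> mats D \<Longrightarrow> adj A \<in> mats D"
  by (auto simp: mats_def adj_def)

lemma adj_adj [simp]: "adj (adj A) = A"
  by (simp add: adj_def)

lemma mmul_assoc: "mmul D (mmul D A B) C = mmul D A (mmul D B C)"
  unfolding mmul_def
  by (auto simp: sum_distrib_left sum_distrib_right mult.assoc intro!: ext sum.swap)

lemma mmul_idm_left: "A \<in> mats D \<Longrightarrow> mmul D (idm D) A = A"
  by (auto simp: mmul_def idm_def mats_def if_distrib[of "\<lambda>x. x * _"] cong: if_cong intro!: ext)

lemma mmul_idm_right: "A \<in> mats D \<Longrightarrow> mmul D A (idm D) = A"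
  by (auto simp: mmul_def idm_def mats_def if_distrib[of "\<lambda>x. _ * x"] cong: if_cong intro!: ext)

lemma adj_mmul: "adj (mmul D A B) = mmul D (adj B) (adj A)"
  by (auto simp: adj_def mmul_def mult.commute intro!: ext)

lemma tr_mmul_commute: "tr D (mmul D A B) = tr D (mmul D B A)"
  unfolding tr_def mmul_def by (simp, subst sum.swap, simp add: mult.commute)

lemma hs_swap: "hs D A B = cnj (hs D B A)"
  unfolding hs_def tr_def mmul_def adj_def by (simp add: mult.commute)

lemma hs_adj_left: "hs D (adj W) X = tr D (mmul D W X)"
  by (simp add: hs_def)

lemma unitary_adj: "unitary D U \<Longrightarrow> unitary D (adj U)"
  by (auto simp: unitary_def adj_mats)

lemma unitary_mmul: "unitary D U \<Longrightarrow> unitary D V \<Longrightarrow> unitary D (mmul D U V)"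
  unfolding unitary_def
  by (simp add: adj_mmul mmul_assoc, metis (no_types) adj_mats mmul_assoc mmul_idm_left)

lemma omega_adj_omega: "unitary D g \<Longrightarrow> A \<in> mats D \<Longrightarrow> omega_adj D g (omega D g A) = A"
  unfolding omega_adj_def omega_def unitary_def
  by (metis mmul_assoc mmul_idm_left mmul_idm_right)

lemma omega_omega_adj: "unitary D g \<Longrightarrow> A \<in> mats D \<Longrightarrow> omega D g (omega_adj D g A) = A"
  unfolding omega_adj_def omega_def unitary_def
  by (metis mmul_assoc mmul_idm_left mmul_idm_right)

lemma omega_adj_mats: "omega_adj D g A \<in> mats D"
  by (simp add: omega_adj_def)

lemma omega_adj_zero: "omega_adj D g (\<lambda>i j. 0) = (\<lambda>i j. 0)"
  by (auto simp: omega_adj_def mmul_def intro!: ext)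

lemma omega_adj_mmul:
  assumes "unitary D g"
  shows "mmul D (omega_adj D g A) (omega_adj D g B) = omega_adj D g (mmul D A B)"
proof -
  have "mmul D g (adj g) = idm D" using assms by (simp add: unitary_def)
  then have "mmul D (mmul D g (adj g)) (mmul D B g) = mmul D B g" by (simp add: mmul_idm_left)
  then show ?thesis unfolding omega_adj_def by (simp add: mmul_assoc)
qed

lemma tr_omega_adj: "tr D (mmul D (omega_adj D g A) X) = tr D (mmul D A (omega D g X))"
proof -
  have "tr D (mmul D (omega_adj D g A) X) = tr D (mmul D (adj g) (mmul D (mmul D A g) X))"
    by (simp add: omega_adj_def mmul_assoc)
  also have "\<dots> = tr D (mmul D (mmul D (mmul D A g) X) (adj g))" by (rule tr_mmul_commute)
  finally show ?thesis by (simp add: omega_def mmul_assoc)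
qed

lemma mmul_smul_left: "mmul D (smul c A) B = smul c (mmul D A B)"
  by (auto simp: mmul_def smul_def sum_distrib_left mult.assoc intro!: ext)

lemma mmul_smul_right: "mmul D A (smul c B) = smul c (mmul D A B)"
  by (auto simp: mmul_def smul_def sum_distrib_left mult.assoc mult.left_commute intro!: ext)

lemma smul_smul: "smul c (smul c' A) = smul (c * c') A"
  by (auto simp: smul_def intro!: ext)

lemma smul_one [simp]: "smul 1 A = A"
  by (auto simp: smul_def intro!: ext)

lemma smul_sign_flip: "s \<in> {1, -1::complex} \<Longrightarrow> A = smul s B \<Longrightarrow> B = smul s A"
  by (auto simp: smul_def)

lemma omega_adj_smul: "omega_adj D g (smul c A) = smul c (omega_adj D g A)"
  by (simp add: omega_adj_def mmul_smul_left mmul_smul_right)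

lemma omega_smul: "omega D g (smul c A) = smul c (omega D g A)"
  by (simp add: omega_def mmul_smul_left mmul_smul_right)

lemma tr_smul: "tr D (smul c A) = c * tr D A"
  by (simp add: tr_def smul_def sum_distrib_left)

lemma hs_smul: "hs D B (smul c A) = c * hs D B A"
  by (simp only: hs_def mmul_smul_right tr_smul)

definition lin_comb :: "'k set \<Rightarrow> ('k \<Rightarrow> complex) \<Rightarrow> ('k \<Rightarrow> cmat) \<Rightarrow> cmat" where
  "lin_comb S c A = (\<lambda>i j. \<Sum>k\<in>S. c k * A k i j)"

lemma lin_comb_mats: "(\<And>k. k \<in> S \<Longrightarrow> A k \<in> mats D) \<Longrightarrow> lin_comb S c A \<in> mats D"
  by (auto simp: mats_def lin_comb_def)

lemma mmul_lin_comb_left: "mmul D (lin_comb S c A) B = lin_comb S c (\<lambda>k. mmul D (A k) B)"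
  unfolding mmul_def lin_comb_def
  by (auto simp: sum_distrib_left sum_distrib_right mult.assoc intro!: ext sum.swap)

lemma mmul_lin_comb_right: "mmul D B (lin_comb S c A) = lin_comb S c (\<lambda>k. mmul D B (A k))"
  unfolding mmul_def lin_comb_def
  by (auto simp: sum_distrib_left mult.left_commute intro!: ext sum.swap)

lemma omega_adj_lin_comb: "omega_adj D g (lin_comb S c A) = lin_comb S c (\<lambda>k. omega_adj D g (A k))"
  by (simp add: omega_adj_def mmul_lin_comb_left mmul_lin_comb_right)

lemma omega_lin_comb: "omega D g (lin_comb S c A) = lin_comb S c (\<lambda>k. omega D g (A k))"
  by (simp add: omega_def mmul_lin_comb_left mmul_lin_comb_right)

lemma tr_lin_comb: "tr D (lin_comb S c A) = (\<Sum>k\<in>S. c k * tr D (A k))"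
  by (simp add: tr_def lin_comb_def sum_distrib_left, rule sum.swap)

lemma hs_lin_comb: "hs D B (lin_comb S c A) = (\<Sum>k\<in>S. c k * hs D B (A k))"
  by (simp add: hs_def mmul_lin_comb_right tr_lin_comb)

section \<open>Pauli operators\<close>

text \<open>Qubit 0 is the least significant bit of a basis index, so the Pauli operator of
  q # a is the 2 x 2 factor for q acting on r mod 2, tensored with that of a acting on r div 2.\<close>

definition kron :: "nat \<Rightarrow> cmat \<Rightarrow> cmat \<Rightarrow> cmat" where
  "kron D P A = (\<lambda>r c. if r < 2 * D \<and> c < 2 * D
                        then P (r mod 2) (c mod 2) * A (r div 2) (c div 2) else 0)"

lemma sum_mod_div_2: "(\<Sum>k<2 * D. f (k mod 2) (k div 2)) = (\<Sum>k<D. \<Sum>t<2::nat. f t (k::nat))"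
proof -
  have "(\<Sum>r<2 * m. h r) = (\<Sum>r<m. h (2 * r) + h (2 * r + 1::nat))" for m and h :: "nat \<Rightarrow> 'a"
    by (induction m) (simp_all add: sum.distrib add_ac)
  moreover have "{..<2::nat} = {0, 1}" by auto
  ultimately show ?thesis by (simp add: add.commute)
qed

lemma mmul_kron: "mmul (2 * D) (kron D P A) (kron D Q B) = kron D (mmul 2 P Q) (mmul D A B)"
proof (intro ext)
  fix r c
  show "mmul (2 * D) (kron D P A) (kron D Q B) r c = kron D (mmul 2 P Q) (mmul D A B) r c"
  proof (cases "r < 2 * D \<and> c < 2 * D")
    case True
    have "mmul (2 * D) (kron D P A) (kron D Q B) r c =
       (\<Sum>k<2 * D. (\<lambda>t k'. P (r mod 2) t * A (r div 2) k' * (Q t (c mod 2) * B k' (c div 2)))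
                     (k mod 2) (k div 2))"
      using True by (auto simp: mmul_def kron_def intro!: sum.cong)
    also have "\<dots> = (\<Sum>k<D. \<Sum>t<2. P (r mod 2) t * A (r div 2) k * (Q t (c mod 2) * B k (c div 2)))"
      by (rule sum_mod_div_2)
    also have "\<dots> = (\<Sum>t<2. P (r mod 2) t * Q t (c mod 2)) * (\<Sum>k<D. A (r div 2) k * B k (c div 2))"
      by (simp add: sum_distrib_left sum_distrib_right mult_ac sum.swap[of _ "{..<D}"])
    also have "\<dots> = kron D (mmul 2 P Q) (mmul D A B) r c"
      using True by (simp add: kron_def mmul_def less_mult_imp_div_less)
    finally show ?thesis .
  qed (auto simp: mmul_def kron_def)
qed

lemma adj_kron: "adj (kron D P A) = kron D (adj P) (adj A)"
  by (auto simp: adj_def kron_def intro!: ext)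

lemma tr_kron: "tr (2 * D) (kron D P A) = tr 2 P * tr D A"
proof -
  have "tr (2 * D) (kron D P A) = (\<Sum>k<2 * D. (\<lambda>t k'. P t t * A k' k') (k mod 2) (k div 2))"
    by (auto simp: tr_def kron_def intro!: sum.cong)
  also have "\<dots> = (\<Sum>k<D. \<Sum>t<2. P t t * A k k)" by (rule sum_mod_div_2)
  also have "\<dots> = tr 2 P * tr D A"
    by (simp add: tr_def sum_distrib_left sum_distrib_right mult_ac sum.swap[of _ "{..<D}"])
  finally show ?thesis .
qed

lemma hs_kron: "hs (2 * D) (kron D P A) (kron D Q B) = hs 2 P Q * hs D A B"
  by (simp add: hs_def adj_kron mmul_kron tr_kron)

lemma kron_idm: "kron D (idm 2) (idm D) = idm (2 * D)"
  by (auto simp: kron_def idm_def intro!: ext) (metis div_mult_mod_eq)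

definition pauli1_mat :: "bool \<times> bool \<Rightarrow> cmat" where
  "pauli1_mat q = (\<lambda>r c. if r < 2 \<and> c < 2 then pauli1 q r c else 0)"

lemma bool_pair_cases:
  obtains "q = (False, False)" | "q = (False, True)" | "q = (True, True)" | "q = (True, False)"
  by (cases q) auto

lemma pauli1_mat_sq: "mmul 2 (pauli1_mat q) (pauli1_mat q) = idm 2"
  by (cases q rule: bool_pair_cases)
    (auto simp: mmul_def pauli1_mat_def idm_def numeral_2_eq_2 less_Suc_eq intro!: ext)

lemma pauli1_mat_adj: "adj (pauli1_mat q) = pauli1_mat q"
  by (cases q rule: bool_pair_cases)
    (auto simp: adj_def pauli1_mat_def numeral_2_eq_2 less_Suc_eq intro!: ext)

lemma hs_pauli1_mat: "hs 2 (pauli1_mat q) (pauli1_mat q') = (if q = q' then 2 else 0)"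
  by (cases q rule: bool_pair_cases; cases q' rule: bool_pair_cases)
    (auto simp: hs_def tr_def mmul_def adj_def pauli1_mat_def numeral_2_eq_2)

lemma pauli_0: "pauli 0 a = idm 1"
  by (auto simp: pauli_def idm_def intro!: ext)

lemma pauli_Cons: "pauli (Suc n) (q # a) = kron (2 ^ n) (pauli1_mat q) (pauli n a)"
proof (intro ext)
  fix r c
  have bit: "bitv 0 r = r mod 2" "bitv (Suc i) r = bitv i (r div 2)" for i r
    by (simp_all add: bitv_def div_mult2_eq)
  have "(\<Prod>i<Suc n. pauli1 ((q # a) ! i) (bitv i r) (bitv i c)) =
        pauli1 q (r mod 2) (c mod 2) * (\<Prod>i<n. pauli1 (a ! i) (bitv i (r div 2)) (bitv i (c div 2)))"
    unfolding prod.lessThan_Suc_shift by (simp add: bit)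
  moreover have "(r < 2 ^ Suc n) = (r div 2 < (2::nat) ^ n)" "(c < 2 ^ Suc n) = (c div 2 < (2::nat) ^ n)"
    by auto
  ultimately show "pauli (Suc n) (q # a) r c = kron (2 ^ n) (pauli1_mat q) (pauli n a) r c"
    unfolding pauli_def kron_def pauli1_mat_def by auto
qed

lemma pauli_mats: "pauli n a \<in> mats (2 ^ n)"
  by (auto simp: pauli_def mats_def)

lemma pauli_adj: "length a = n \<Longrightarrow> adj (pauli n a) = pauli n a"
proof (induction n arbitrary: a)
  case 0 then show ?case by (auto simp: pauli_0 adj_def idm_def intro!: ext)
next
  case (Suc n)
  then obtain q a' where "a = q # a'" "length a' = n" by (cases a) auto
  with Suc show ?case by (simp add: pauli_Cons adj_kron pauli1_mat_adj)
qed

lemma pauli_sq: "length a = n \<Longrightarrow> mmul (2 ^ n) (pauli n a) (pauli n a) = idm (2 ^ n)"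
proof (induction n arbitrary: a)
  case 0 then show ?case by (auto simp: pauli_0 mmul_def idm_def intro!: ext)
next
  case (Suc n)
  then obtain q a' where "a = q # a'" "length a' = n" by (cases a) auto
  with Suc show ?case by (simp add: pauli_Cons mmul_kron pauli1_mat_sq kron_idm)
qed

lemma hs_pauli:
  "length a = n \<Longrightarrow> length b = n \<Longrightarrow> hs (2 ^ n) (pauli n a) (pauli n b) = (if a = b then 2 ^ n else 0)"
proof (induction n arbitrary: a b)
  case 0 then show ?case by (auto simp: pauli_0 hs_def tr_def mmul_def idm_def adj_def)
next
  case (Suc n)
  then obtain q a' q' b' where "a = q # a'" "length a' = n" "b = q' # b'" "length b' = n"
    by (metis length_Suc_conv)
  with Suc show ?case by (simp add: pauli_Cons hs_kron hs_pauli1_mat)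
qed

lemma pauli_unitary: "length a = n \<Longrightarrow> unitary (2 ^ n) (pauli n a)"
  by (simp add: unitary_def pauli_mats pauli_adj pauli_sq)

lemma pauli_neq_zero: "a \<in> pidx n \<Longrightarrow> pauli n a \<noteq> (\<lambda>i j. 0)"
  using hs_pauli[of a n a] by (auto simp: pidx_def hs_def tr_def mmul_def)

lemma pauli_eq_signed_imp_eq:
  assumes "a \<in> pidx n" "b \<in> pidx n" "pauli n a = smul s (pauli n b)" "s \<in> {1, -1}"
  shows "a = b"
proof (rule ccontr)
  assume "a \<noteq> b"
  have "hs (2 ^ n) (pauli n a) (pauli n a) = s * hs (2 ^ n) (pauli n a) (pauli n b)"
    by (subst (2) assms(3), simp only: hs_smul)
  with assms(1,2) \<open>a \<noteq> b\<close> show False by (simp add: hs_pauli pidx_def)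
qed

lemma finite_pidx: "finite (pidx n)"
  using finite_lists_length_eq[of "UNIV :: (bool \<times> bool) set" n] by (simp add: pidx_def)

lemma finite_zidx: "finite (zidx n)"
  using finite_lists_length_eq[of "UNIV :: bool set" n] by (simp add: zidx_def)

lemma pidx_nonempty: "pidx n \<noteq> {}"
  by (auto simp: pidx_def intro: exI[of _ "replicate n (False, False)"])

section \<open>Z-type Paulis and the measurement channel\<close>

definition ztype :: "bool list \<Rightarrow> (bool \<times> bool) list" where
  "ztype z = map (\<lambda>b. (b, False)) z"

lemma Zop_eq_pauli_ztype: "Zop n z = pauli n (ztype z)"
  by (simp add: Zop_def ztype_def)

lemma ztype_in_pidx: "z \<in> zidx n \<Longrightarrow> ztype z \<in> pidx n"
  by (simp add: ztype_def zidx_def pidx_def)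

lemma ztype_inj: "ztype z = ztype z' \<Longrightarrow> z = z'"
  by (simp add: ztype_def inj_map_eq_map inj_def)

lemma Zop_mats: "Zop n z \<in> mats (2 ^ n)"
  by (simp add: Zop_def pauli_mats)

lemma Zop_0: "Zop 0 z = idm 1"
  by (simp add: Zop_def pauli_0)

lemma Zop_Cons: "Zop (Suc n) (b # z) = kron (2 ^ n) (pauli1_mat (b, False)) (Zop n z)"
  by (simp add: Zop_def pauli_Cons)

lemma sum_zidx_Suc: "(\<Sum>z\<in>zidx (Suc n). f z) = (\<Sum>b\<in>UNIV. \<Sum>z\<in>zidx n. f (b # z))"
proof -
  have "zidx (Suc n) = (\<lambda>(b, z). b # z) ` (UNIV \<times> zidx n)"
    by (auto simp: zidx_def image_iff length_Suc_conv)
  moreover have "inj_on (\<lambda>(b, z). b # z) (UNIV \<times> zidx n)" by (auto simp: inj_on_def)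
  ultimately show ?thesis by (simp add: sum.reindex sum.cartesian_product case_prod_unfold)
qed

definition diag_mat :: "cmat \<Rightarrow> bool" where
  "diag_mat A \<longleftrightarrow> (\<forall>r c. r \<noteq> c \<longrightarrow> A r c = 0)"

lemma diag_mat_kron: "diag_mat P \<Longrightarrow> diag_mat A \<Longrightarrow> diag_mat (kron D P A)"
  unfolding diag_mat_def kron_def by (metis div_mult_mod_eq mult_zero_left mult_zero_right)

lemma diag_Zop: "length z = n \<Longrightarrow> diag_mat (Zop n z)"
proof (induction n arbitrary: z)
  case 0 then show ?case by (simp add: Zop_0 diag_mat_def idm_def)
next
  case (Suc n)
  then obtain b z' where "z = b # z'" "length z' = n" by (cases z) auto
  moreover have "diag_mat (pauli1_mat (b, False))" by (cases b) (auto simp: diag_mat_def pauli1_mat_def)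
  ultimately show ?case using Suc by (simp add: Zop_Cons diag_mat_kron)
qed

lemma diag_mmul:
  assumes "diag_mat Z" "diag_mat Z'"
  shows "mmul D Z Z' x k = (if x = k \<and> x < D then Z x x * Z' x x else 0)"
proof (cases "x < D \<and> k < D")
  case True
  have "(\<Sum>l<D. Z x l * Z' l k) = (\<Sum>l<D. if l = x then Z x x * Z' x k else 0)"
    by (rule sum.cong) (use assms(1) in \<open>auto simp: diag_mat_def\<close>)
  then show ?thesis using True assms(2) by (auto simp: mmul_def diag_mat_def)
qed (auto simp: mmul_def)

lemma diag_mat_commute: "diag_mat Z \<Longrightarrow> diag_mat Z' \<Longrightarrow> mmul D Z Z' = mmul D Z' Z"
  by (intro ext) (simp add: diag_mmul mult.commute)

lemma tr_mmul_diag: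
  assumes "diag_mat Z" "diag_mat Z'"
  shows "tr D (mmul D (mmul D Z Z') M) = (\<Sum>x<D. Z x x * Z' x x * M x x)"
proof -
  have "tr D (mmul D (mmul D Z Z') M) = (\<Sum>x<D. \<Sum>k<D. mmul D Z Z' x k * M k x)"
    by (simp add: tr_def mmul_def)
  also have "\<dots> = (\<Sum>x<D. \<Sum>k<D. if k = x then Z x x * Z' x x * M x x else 0)"
    by (intro sum.cong refl) (auto simp: diag_mmul[OF assms])
  finally show ?thesis by simp
qed

lemma sum_Zop_diag_entry: "x < 2 ^ n \<Longrightarrow> (\<Sum>z\<in>zidx n. Zop n z x x * Zop n z r c) = 2 ^ n * Ex x r c"
proof (induction n arbitrary: x r c)
  case 0 then show ?case by (auto simp: zidx_def Zop_0 idm_def Ex_def)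
next
  case (Suc n)
  let ?D = "(2::nat) ^ n"
  show ?case
  proof (cases "r < 2 * ?D \<and> c < 2 * ?D")
    case True
    have x2: "x < 2 * ?D" using Suc.prems by simp
    have bit: "t < 2 \<Longrightarrow> u < 2 \<Longrightarrow> v < 2 \<Longrightarrow>
       (\<Sum>b\<in>UNIV. pauli1_mat (b, False) t t * pauli1_mat (b, False) u v) = (if t = u \<and> t = v then 2 else 0)"
      for t u v by (auto simp: pauli1_mat_def less_2_cases_iff UNIV_bool)
    have "(\<Sum>z\<in>zidx (Suc n). Zop (Suc n) z x x * Zop (Suc n) z r c) =
       (\<Sum>b\<in>UNIV. \<Sum>z\<in>zidx n.
          (pauli1_mat (b, False) (x mod 2) (x mod 2) * pauli1_mat (b, False) (r mod 2) (c mod 2)) *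
          (Zop n z (x div 2) (x div 2) * Zop n z (r div 2) (c div 2)))"
      using True x2 by (simp add: sum_zidx_Suc Zop_Cons kron_def mult_ac)
    also have "\<dots> = (\<Sum>b\<in>UNIV. pauli1_mat (b, False) (x mod 2) (x mod 2) * pauli1_mat (b, False) (r mod 2) (c mod 2)) *
            (\<Sum>z\<in>zidx n. Zop n z (x div 2) (x div 2) * Zop n z (r div 2) (c div 2))"
      by (rule sum_product[symmetric])
    also have "\<dots> = (if x mod 2 = r mod 2 \<and> x mod 2 = c mod 2 then 2 else 0) * (?D * Ex (x div 2) (r div 2) (c div 2))"
      using Suc.IH[of "x div 2"] x2 by (simp add: bit)
    also have "\<dots> = 2 ^ Suc n * Ex x r c"
      by (auto simp: Ex_def) (metis div_mult_mod_eq)+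
    finally show ?thesis .
  next
    case False
    then have "Ex x r c = 0" using Suc.prems by (auto simp: Ex_def)
    moreover have "Zop (Suc n) z r c = 0" for z
      using False Zop_mats[of "Suc n"] by (auto simp: mats_def)
    ultimately show ?thesis by simp
  qed
qed

lemma Ex_eq_lin_comb_Zop: "x < 2 ^ n \<Longrightarrow> Ex x = lin_comb (zidx n) (\<lambda>z. Zop n z x x / 2 ^ n) (Zop n)"
  by (intro ext) (simp add: lin_comb_def sum_divide_distrib[symmetric] sum_Zop_diag_entry)

lemma hs_Ex:
  assumes "x < D"
  shows "hs D (Ex x) A = A x x"
proof -
  have "hs D (Ex x) A = (\<Sum>i<D. \<Sum>k<D. if k = x \<and> i = x then A k i else 0)"
    by (auto simp: hs_def tr_def mmul_def adj_def Ex_def intro!: sum.cong)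
  also have "\<dots> = (\<Sum>i<D. if i = x then (\<Sum>k<D. if k = x then A k i else 0) else 0)"
    by (rule sum.cong) auto
  finally show ?thesis using assms by simp
qed

lemma Mmap_eq: "Mmap D A = (\<lambda>i j. if i = j \<and> i < D then A i i else 0)"
proof (intro ext)
  fix i j
  have "Mmap D A i j = (\<Sum>x<D. A x x * Ex x i j)"
    unfolding Mmap_def by (rule sum.cong) (simp_all add: hs_Ex)
  also have "\<dots> = (\<Sum>x<D. if i = x \<and> j = x then A x x else 0)"
    by (intro sum.cong) (auto simp: Ex_def)
  also have "\<dots> = (if i = j \<and> i < D then A i i else 0)"
    by (cases "i = j") (auto intro!: sum.neutral)
  finally show "Mmap D A i j = (if i = j \<and> i < D then A i i else 0)" .
qed

lemma Mmap_lin_comb: "Mmap D (lin_comb S c A) = lin_comb S c (\<lambda>k. Mmap D (A k))"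
  by (auto simp: Mmap_eq lin_comb_def intro!: ext sum.neutral)

lemma Mmap_smul: "Mmap D (smul c A) = smul c (Mmap D A)"
  by (auto simp: Mmap_eq smul_def intro!: ext)

lemma Mmap_diag_mat: "A \<in> mats D \<Longrightarrow> diag_mat A \<Longrightarrow> Mmap D A = A"
  by (auto simp: Mmap_eq diag_mat_def mats_def intro!: ext)

lemma pauli_diag_entry_zero:
  "length c = n \<Longrightarrow> i < n \<Longrightarrow> snd (c ! i) \<Longrightarrow> pauli n c r r = 0"
proof (induction n arbitrary: c i r)
  case 0 then show ?case by simp
next
  case (Suc n)
  then obtain q c' where c: "c = q # c'" "length c' = n" by (cases c) auto
  show ?case
  proof (cases i)
    case 0
    with Suc.prems c obtain b where "q = (b, True)" by (cases q) auto
    then have "pauli1_mat q (r mod 2) (r mod 2) = 0" by (cases b) (auto simp: pauli1_mat_def)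
    then show ?thesis by (simp add: c pauli_Cons kron_def)
  next
    case (Suc i')
    then have "pauli n c' (r div 2) (r div 2) = 0" using Suc.IH[of c' i'] Suc.prems c by simp
    then show ?thesis by (simp add: c pauli_Cons kron_def)
  qed
qed

lemma ztype_map_fst: "(\<And>i. i < length c \<Longrightarrow> \<not> snd (c ! i)) \<Longrightarrow> ztype (map fst c) = c"
  unfolding ztype_def by (auto intro!: nth_equalityI) (metis prod.collapse)

lemma Mmap_pauli:
  assumes c: "c \<in> pidx n"
  shows "Mmap (2 ^ n) (pauli n c) = (if c = ztype (map fst c) then pauli n c else (\<lambda>i j. 0))"
proof (cases "c = ztype (map fst c)")
  case True
  then have "diag_mat (pauli n c)"
    using c diag_Zop[of "map fst c" n] by (metis Zop_eq_pauli_ztype length_map mem_Collect_eq pidx_def)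
  with True show ?thesis by (simp add: Mmap_diag_mat pauli_mats)
next
  case False
  then obtain i where "i < n" "snd (c ! i)" using c ztype_map_fst[of c] by (auto simp: pidx_def)
  with False c show ?thesis using pauli_diag_entry_zero by (auto simp: Mmap_eq pidx_def intro!: ext)
qed

section \<open>Clifford conjugation and the frame operator\<close>

lemma clifford_unitary: "clifford n g \<Longrightarrow> unitary (2 ^ n) g"
  by (simp add: clifford_def)

text \<open>The definition of a Clifford only provides g sigma_a g^dagger = +-sigma_b; conjugation is
  injective on the finitely many Paulis up to sign, hence also surjective, which gives the
  adjoint direction.\<close>

lemma clifford_adj_pauli:
  assumes cl: "clifford n g" and b: "b \<in> pidx n"
  shows "\<exists>a\<in>pidx n. \<exists>s\<in>{1, -1}. omega_adj (2 ^ n) g (pauli n b) = smul s (pauli n a)"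
proof -
  let ?D = "(2::nat) ^ n"
  have U: "unitary ?D g" using cl by (rule clifford_unitary)
  have "\<forall>a\<in>pidx n. \<exists>b\<in>pidx n. \<exists>s\<in>{1, -1}. omega ?D g (pauli n a) = smul s (pauli n b)"
    using cl by (simp add: clifford_def)
  then obtain f where f: "\<And>a. a \<in> pidx n \<Longrightarrow> f a \<in> pidx n"
    and s: "\<And>a. a \<in> pidx n \<Longrightarrow> \<exists>s\<in>{1, -1}. omega ?D g (pauli n a) = smul s (pauli n (f a))"
    by metis
  have recover: "pauli n a = smul s (omega_adj ?D g (pauli n (f a)))"
    if "s \<in> {1, -1}" "omega ?D g (pauli n a) = smul s (pauli n (f a))" for a s
    using that U by (metis omega_adj_omega omega_adj_smul pauli_mats)
  have "inj_on f (pidx n)"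
  proof (rule inj_onI)
    fix a a' assume a: "a \<in> pidx n" and a': "a' \<in> pidx n" and eq: "f a = f a'"
    obtain t t' where t: "t \<in> {1, -1}" "pauli n a = smul t (omega_adj ?D g (pauli n (f a)))"
      and t': "t' \<in> {1, -1}" "pauli n a' = smul t' (omega_adj ?D g (pauli n (f a)))"
      using s[OF a] s[OF a'] recover eq by metis
    then have "pauli n a = smul (t * t') (pauli n a')"
      by (metis smul_sign_flip smul_smul)
    moreover have "t * t' \<in> {1, -1}" using t t' by auto
    ultimately show "a = a'" using pauli_eq_signed_imp_eq[OF a a'] by blast
  qed
  then have "f ` pidx n = pidx n"
    using f by (intro endo_inj_surj finite_pidx) auto
  then obtain a where a: "a \<in> pidx n" "f a = b" using b by (metis imageE)
  with s[OF a(1)] recover show ?thesis by (metis smul_sign_flip)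
qed

lemma Xi_pauli:
  assumes cl: "clifford n g" and z: "z \<in> zidx n"
  shows "Xi n z g \<in> pidx n \<and> (\<exists>s\<in>{1, -1}. omega_adj (2 ^ n) g (Zop n z) = smul s (pauli n (Xi n z g)))"
proof -
  let ?Y = "omega_adj (2 ^ n) g (Zop n z)"
  have "\<exists>a\<in>pidx n. \<exists>s\<in>{1, -1}. ?Y = smul s (pauli n a)"
    using clifford_adj_pauli[OF cl ztype_in_pidx[OF z]] by (simp only: Zop_eq_pauli_ztype)
  then obtain a s where a: "a \<in> pidx n" and s: "s \<in> {1, -1}" and Y: "?Y = smul s (pauli n a)"
    by blast
  have uniq: "b = a" if "b \<in> pidx n" "s' \<in> {1, -1}" "?Y = smul s' (pauli n b)" for b s'
  proof -
    have "pauli n b = smul s' (smul s (pauli n a))" using smul_sign_flip[OF that(2,3)] Y by simp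
    then have "pauli n b = smul (s' * s) (pauli n a)" by (simp only: smul_smul)
    moreover have "s' * s \<in> {1, -1}" using that(2) s by auto
    ultimately show ?thesis using pauli_eq_signed_imp_eq[OF that(1) a] by blast
  qed
  have "\<exists>!b. b \<in> pidx n \<and> (?Y = pauli n b \<or> ?Y = smul (-1) (pauli n b))"
  proof (rule ex1I[of _ a])
    show "a \<in> pidx n \<and> (?Y = pauli n a \<or> ?Y = smul (-1) (pauli n a))" using a s Y by auto
  next
    fix b assume "b \<in> pidx n \<and> (?Y = pauli n b \<or> ?Y = smul (-1) (pauli n b))"
    then show "b = a" using uniq[of b 1] uniq[of b "-1"] by auto
  qed
  from theI'[OF this] have "Xi n z g \<in> pidx n \<and>
      (?Y = pauli n (Xi n z g) \<or> ?Y = smul (-1) (pauli n (Xi n z g)))"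
    unfolding Xi_def by blast
  then show ?thesis by (metis insertCI smul_one)
qed

lemma Xi_eq_iff:
  assumes cl: "clifford n g" and z: "z \<in> zidx n" and a: "a \<in> pidx n"
  shows "Xi n z g = a \<longleftrightarrow> (\<exists>s\<in>{1, -1}. omega (2 ^ n) g (pauli n a) = smul s (Zop n z))"
proof -
  let ?D = "(2::nat) ^ n"
  have U: "unitary ?D g" using cl by (rule clifford_unitary)
  obtain s where s: "s \<in> {1, -1}" "omega_adj ?D g (Zop n z) = smul s (pauli n (Xi n z g))"
    and Xi: "Xi n z g \<in> pidx n"
    using Xi_pauli[OF cl z] by blast
  show ?thesis
  proof
    have "Zop n z = omega ?D g (omega_adj ?D g (Zop n z))"
      using U by (simp add: omega_omega_adj Zop_mats)
    also have "\<dots> = smul s (omega ?D g (pauli n (Xi n z g)))" using s(2) by (simp add: omega_smul)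
    finally have "omega ?D g (pauli n (Xi n z g)) = smul s (Zop n z)" by (rule smul_sign_flip[OF s(1)])
    moreover assume "Xi n z g = a"
    ultimately show "\<exists>s\<in>{1, -1}. omega ?D g (pauli n a) = smul s (Zop n z)" using s(1) by auto
  next
    assume "\<exists>s'\<in>{1, -1}. omega ?D g (pauli n a) = smul s' (Zop n z)"
    then obtain s' where s': "s' \<in> {1, -1}" "omega ?D g (pauli n a) = smul s' (Zop n z)" by blast
    have "pauli n a = omega_adj ?D g (omega ?D g (pauli n a))"
      using U by (simp add: omega_adj_omega pauli_mats)
    also have "\<dots> = smul (s' * s) (pauli n (Xi n z g))"
      using s'(2) s(2) by (simp add: omega_adj_smul smul_smul)
    finally have "pauli n a = smul (s' * s) (pauli n (Xi n z g))" .
    moreover have "s' * s \<in> {1, -1}" using s'(1) s(1) by auto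
    ultimately show "Xi n z g = a" using pauli_eq_signed_imp_eq[OF a Xi] by simp
  qed
qed

lemma Xi_inj:
  assumes cl: "clifford n g" and z: "z \<in> zidx n" and z': "z' \<in> zidx n"
    and eq: "Xi n z g = Xi n z' g"
  shows "z = z'"
proof -
  let ?a = "Xi n z g"
  have a: "?a \<in> pidx n" using Xi_pauli[OF cl z] by blast
  have "\<exists>s\<in>{1, -1}. omega (2 ^ n) g (pauli n ?a) = smul s (Zop n z)"
    using Xi_eq_iff[OF cl z a] by simp
  moreover have "\<exists>s\<in>{1, -1}. omega (2 ^ n) g (pauli n ?a) = smul s (Zop n z')"
    using Xi_eq_iff[OF cl z' a] eq by simp
  ultimately obtain s s' where s: "s \<in> {1, -1}" "omega (2 ^ n) g (pauli n ?a) = smul s (Zop n z)"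
    and s': "s' \<in> {1, -1}" "omega (2 ^ n) g (pauli n ?a) = smul s' (Zop n z')"
    by blast
  have "Zop n z = smul s (smul s' (Zop n z'))" using smul_sign_flip[OF s] s'(2) by simp
  then have "pauli n (ztype z) = smul (s * s') (pauli n (ztype z'))"
    by (simp add: smul_smul Zop_eq_pauli_ztype)
  moreover have "s * s' \<in> {1, -1}" using s(1) s'(1) by auto
  ultimately show ?thesis
    using pauli_eq_signed_imp_eq[OF ztype_in_pidx[OF z] ztype_in_pidx[OF z']] ztype_inj by blast
qed

lemma Xi_hit_iff_ztype:
  assumes cl: "clifford n g" and a: "a \<in> pidx n" and c: "c \<in> pidx n" and t: "t \<in> {1, -1}"
    and gc: "omega (2 ^ n) g (pauli n a) = smul t (pauli n c)"
  shows "(\<exists>z\<in>zidx n. Xi n z g = a) \<longleftrightarrow> c = ztype (map fst c)"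
proof
  assume "\<exists>z\<in>zidx n. Xi n z g = a"
  then obtain z s where z: "z \<in> zidx n" and s: "s \<in> {1, -1}"
    and "omega (2 ^ n) g (pauli n a) = smul s (Zop n z)"
    using Xi_eq_iff[OF cl _ a] by blast
  then have "pauli n c = smul t (smul s (Zop n z))" using smul_sign_flip[OF t gc] by simp
  then have "pauli n c = smul (t * s) (pauli n (ztype z))" by (simp add: smul_smul Zop_eq_pauli_ztype)
  moreover have "t * s \<in> {1, -1}" using s t by auto
  ultimately have "c = ztype z" using pauli_eq_signed_imp_eq[OF c ztype_in_pidx[OF z]] by blast
  then show "c = ztype (map fst c)" by (simp add: ztype_def comp_def)
next
  assume cz: "c = ztype (map fst c)"
  have z: "map fst c \<in> zidx n" using c by (simp add: pidx_def zidx_def)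
  have "omega (2 ^ n) g (pauli n a) = smul t (Zop n (map fst c))"
    using gc cz by (simp add: Zop_eq_pauli_ztype)
  then show "\<exists>z\<in>zidx n. Xi n z g = a" using Xi_eq_iff[OF cl z a] t z by blast
qed

lemma omega_adj_Mmap_omega_pauli:
  assumes cl: "clifford n g" and a: "a \<in> pidx n"
  shows "omega_adj (2 ^ n) g (Mmap (2 ^ n) (omega (2 ^ n) g (pauli n a))) =
         (if \<exists>z\<in>zidx n. Xi n z g = a then pauli n a else (\<lambda>i j. 0))"
proof -
  obtain c t where c: "c \<in> pidx n" and t: "t \<in> {1, -1}"
    and gc: "omega (2 ^ n) g (pauli n a) = smul t (pauli n c)"
    using cl a unfolding clifford_def by blast
  have "Mmap (2 ^ n) (omega (2 ^ n) g (pauli n a)) =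
        (if \<exists>z\<in>zidx n. Xi n z g = a then omega (2 ^ n) g (pauli n a) else (\<lambda>i j. 0))"
    unfolding Xi_hit_iff_ztype[OF cl a c t gc] gc Mmap_smul Mmap_pauli[OF c] by (simp add: smul_def)
  then show ?thesis by (simp add: omega_adj_omega[OF clifford_unitary[OF cl] pauli_mats] omega_adj_zero)
qed

lemma sum_Xi_indicator:
  assumes cl: "clifford n g"
  shows "(\<Sum>z\<in>zidx n. if Xi n z g = a then 1 else 0) = (if \<exists>z\<in>zidx n. Xi n z g = a then 1 else (0::real))"
proof (cases "\<exists>z\<in>zidx n. Xi n z g = a")
  case True
  then obtain z0 where z0: "z0 \<in> zidx n" "Xi n z0 g = a" by blast
  have "(\<Sum>z\<in>zidx n. if Xi n z g = a then 1 else 0) = (\<Sum>z\<in>zidx n. if z = z0 then 1 else (0::real))"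
  proof (rule sum.cong)
    fix z assume z: "z \<in> zidx n"
    have "Xi n z g = a \<longleftrightarrow> z = z0" using Xi_inj[OF cl z z0(1)] z0(2) by auto
    then show "(if Xi n z g = a then 1 else 0) = (if z = z0 then 1 else (0::real))" by simp
  qed simp
  with True z0(1) finite_zidx[of n] show ?thesis by simp
qed simp

lemma s1_eq_sum_hit:
  assumes fin: "finite G" and cl: "\<forall>g\<in>G. clifford n g"
  shows "s1 n G p a = (\<Sum>g\<in>G. p g * (if \<exists>z\<in>zidx n. Xi n z g = a then 1 else 0))"
proof -
  have "s1 n G p a = (\<Sum>z\<in>zidx n. \<Sum>g\<in>G. if Xi n z g = a then p g else 0)"
    unfolding s1_def using fin by (simp add: sum.inter_filter)
  also have "\<dots> = (\<Sum>g\<in>G. \<Sum>z\<in>zidx n. p g * (if Xi n z g = a then 1 else 0))"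
    by (subst sum.swap) (intro sum.cong; simp)
  also have "\<dots> = (\<Sum>g\<in>G. p g * (if \<exists>z\<in>zidx n. Xi n z g = a then 1 else 0))"
    using cl by (simp add: sum_distrib_left[symmetric] sum_Xi_indicator)
  finally show ?thesis .
qed

lemma s1_nonneg: "\<forall>g\<in>G. p g \<ge> 0 \<Longrightarrow> s1 n G p a \<ge> 0"
  unfolding s1_def by (intro sum_nonneg) auto

lemma Sop_lin_comb: "Sop n G p (lin_comb S c A) = lin_comb S c (\<lambda>k. Sop n G p (A k))"
  unfolding Sop_def omega_lin_comb Mmap_lin_comb omega_adj_lin_comb
  unfolding lin_comb_def by (simp add: sum_distrib_left mult.left_commute, intro ext sum.swap)

lemma Sop_smul: "Sop n G p (smul c A) = smul c (Sop n G p A)"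
  unfolding Sop_def omega_smul Mmap_smul omega_adj_smul
  unfolding smul_def by (simp add: sum_distrib_left mult.left_commute)

lemma Sop_pauli:
  assumes fin: "finite G" and cl: "\<forall>g\<in>G. clifford n g" and a: "a \<in> pidx n"
  shows "Sop n G p (pauli n a) = smul (complex_of_real (s1 n G p a)) (pauli n a)"
proof (intro ext)
  fix i j
  have "Sop n G p (pauli n a) i j =
        (\<Sum>g\<in>G. complex_of_real (p g * (if \<exists>z\<in>zidx n. Xi n z g = a then 1 else 0)) * pauli n a i j)"
    unfolding Sop_def using cl a by (intro sum.cong) (auto simp: omega_adj_Mmap_omega_pauli)
  also have "\<dots> = complex_of_real (s1 n G p a) * pauli n a i j"
    unfolding s1_eq_sum_hit[OF fin cl] by (simp only: of_real_sum sum_distrib_right)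
  finally show "Sop n G p (pauli n a) i j = smul (complex_of_real (s1 n G p a)) (pauli n a) i j"
    by (simp add: smul_def)
qed

lemma s1_pos:
  assumes fin: "finite G" and cl: "\<forall>g\<in>G. clifford n g" and pn: "\<forall>g\<in>G. p g \<ge> 0"
    and S: "bij_betw (Sop n G p) (mats (2 ^ n)) (mats (2 ^ n))" and a: "a \<in> pidx n"
  shows "s1 n G p a > 0"
proof -
  have "s1 n G p a \<noteq> 0"
  proof
    assume "s1 n G p a = 0"
    then have "Sop n G p (pauli n a) = Sop n G p (smul 0 (pauli n a))"
      by (simp add: Sop_pauli[OF fin cl a] Sop_smul smul_smul)
    moreover have "smul 0 (pauli n a) \<in> mats (2 ^ n)" by (simp add: mats_def smul_def)
    ultimately have "pauli n a = smul 0 (pauli n a)"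
      using S pauli_mats unfolding bij_betw_def inj_on_def by blast
    then show False using pauli_neq_zero[OF a] by (simp add: smul_def)
  qed
  then show ?thesis using s1_nonneg[OF pn] by (simp add: order_less_le)
qed

section \<open>The estimator and its second moment\<close>

lemma Sop_omega_adj_Zop:
  assumes fin: "finite G" and cl: "\<forall>g\<in>G. clifford n g" and clg: "clifford n g" and z: "z \<in> zidx n"
  shows "Sop n G p (omega_adj (2 ^ n) g (Zop n z)) =
         smul (complex_of_real (s1 n G p (Xi n z g))) (omega_adj (2 ^ n) g (Zop n z))"
proof -
  obtain e where e: "omega_adj (2 ^ n) g (Zop n z) = smul e (pauli n (Xi n z g))"
    and Xi: "Xi n z g \<in> pidx n"
    using Xi_pauli[OF clg z] by blast
  show ?thesis unfolding e Sop_smul Sop_pauli[OF fin cl Xi] smul_smul by (simp add: mult.commute)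
qed

lemma Sinv_omega_adj_Ex:
  assumes fin: "finite G" and cl: "\<forall>g\<in>G. clifford n g" and pn: "\<forall>g\<in>G. p g \<ge> 0"
    and S: "bij_betw (Sop n G p) (mats (2 ^ n)) (mats (2 ^ n))"
    and clg: "clifford n g" and x: "x < 2 ^ n"
  shows "Sinv n G p (omega_adj (2 ^ n) g (Ex x)) =
     lin_comb (zidx n) (\<lambda>z. Zop n z x x / (2 ^ n * complex_of_real (s1 n G p (Xi n z g))))
       (\<lambda>z. omega_adj (2 ^ n) g (Zop n z))"
    (is "_ = lin_comb _ ?c ?Y")
proof -
  have "Sop n G p (lin_comb (zidx n) ?c ?Y) = lin_comb (zidx n) (\<lambda>z. Zop n z x x / 2 ^ n) ?Y"
    unfolding Sop_lin_comb unfolding lin_comb_def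
  proof (intro ext sum.cong refl)
    fix i j z assume z: "z \<in> zidx n"
    have "s1 n G p (Xi n z g) > 0" using s1_pos[OF fin cl pn S] Xi_pauli[OF clg z] by blast
    then show "?c z * Sop n G p (?Y z) i j = Zop n z x x / 2 ^ n * ?Y z i j"
      unfolding Sop_omega_adj_Zop[OF fin cl clg z] by (simp add: smul_def field_simps)
  qed
  also have "\<dots> = omega_adj (2 ^ n) g (Ex x)" by (simp add: Ex_eq_lin_comb_Zop[OF x] omega_adj_lin_comb)
  finally have "Sop n G p (lin_comb (zidx n) ?c ?Y) = omega_adj (2 ^ n) g (Ex x)" .
  moreover have "lin_comb (zidx n) ?c ?Y \<in> mats (2 ^ n)" by (intro lin_comb_mats omega_adj_mats)
  ultimately show ?thesis
    using S unfolding Sinv_def bij_betw_def by (simp add: inv_into_f_eq)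
qed

definition ohat_coeff ::
    "nat \<Rightarrow> cmat set \<Rightarrow> (cmat \<Rightarrow> real) \<Rightarrow> cmat \<Rightarrow> cmat \<Rightarrow> bool list \<Rightarrow> complex" where
  "ohat_coeff n G p Obs g z =
     hs (2 ^ n) Obs (omega_adj (2 ^ n) g (Zop n z)) / (2 ^ n * complex_of_real (s1 n G p (Xi n z g)))"

lemma ohat_eq_sum_Zop:
  assumes fin: "finite G" and cl: "\<forall>g\<in>G. clifford n g" and pn: "\<forall>g\<in>G. p g \<ge> 0"
    and S: "bij_betw (Sop n G p) (mats (2 ^ n)) (mats (2 ^ n))"
    and clg: "clifford n g" and x: "x < 2 ^ n"
  shows "ohat n G p Obs g x = (\<Sum>z\<in>zidx n. Zop n z x x * ohat_coeff n G p Obs g z)"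
  unfolding ohat_def Sinv_omega_adj_Ex[OF fin cl pn S clg x] hs_lin_comb ohat_coeff_def
  by (simp add: field_simps)

definition shadow_coeff ::
    "nat \<Rightarrow> cmat set \<Rightarrow> (cmat \<Rightarrow> real) \<Rightarrow> cmat \<Rightarrow> (bool \<times> bool) list \<Rightarrow> complex" where
  "shadow_coeff n G p Obs a = hs (2 ^ n) Obs (pauli n a) / (2 ^ n * complex_of_real (s1 n G p a))"

definition pauli_pair_tr ::
    "nat \<Rightarrow> (bool \<times> bool) list \<Rightarrow> (bool \<times> bool) list \<Rightarrow> cmat \<Rightarrow> complex" where
  "pauli_pair_tr n a a' X = tr (2 ^ n) (mmul (2 ^ n) (mmul (2 ^ n) (pauli n a) (pauli n a')) X)"

text \<open>The unknown signs in g^dagger Z_z g = +-sigma_a enter both the coefficients and the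
  trace, so they cancel.\<close>

lemma ohat_coeff_pair:
  assumes clg: "clifford n g" and z: "z \<in> zidx n" and z': "z' \<in> zidx n"
  shows "ohat_coeff n G p Obs g z * ohat_coeff n G p Obs g z' *
           tr (2 ^ n) (mmul (2 ^ n) (mmul (2 ^ n) (omega_adj (2 ^ n) g (Zop n z)) (omega_adj (2 ^ n) g (Zop n z'))) X)
       = shadow_coeff n G p Obs (Xi n z g) * shadow_coeff n G p Obs (Xi n z' g) *
           pauli_pair_tr n (Xi n z g) (Xi n z' g) X"
proof -
  obtain e where e: "e \<in> {1, -1}" "omega_adj (2 ^ n) g (Zop n z) = smul e (pauli n (Xi n z g))"
    using Xi_pauli[OF clg z] by blast
  obtain e' where e': "e' \<in> {1, -1}" "omega_adj (2 ^ n) g (Zop n z') = smul e' (pauli n (Xi n z' g))"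
    using Xi_pauli[OF clg z'] by blast
  have "e * e = 1" "e' * e' = 1" using e(1) e'(1) by auto
  then show ?thesis
    unfolding ohat_coeff_def shadow_coeff_def pauli_pair_tr_def e(2) e'(2) hs_smul
      mmul_smul_left mmul_smul_right smul_smul tr_smul
    by (simp add: algebra_simps)
qed

lemma sum_ohat_sq:
  assumes fin: "finite G" and cl: "\<forall>g\<in>G. clifford n g" and pn: "\<forall>g\<in>G. p g \<ge> 0"
    and S: "bij_betw (Sop n G p) (mats (2 ^ n)) (mats (2 ^ n))" and clg: "clifford n g"
  shows "(\<Sum>x<2 ^ n. omega (2 ^ n) g X x x * (ohat n G p Obs g x)\<^sup>2) =
    (\<Sum>z\<in>zidx n. \<Sum>z'\<in>zidx n. shadow_coeff n G p Obs (Xi n z g) * shadow_coeff n G p Obs (Xi n z' g) *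
        pauli_pair_tr n (Xi n z g) (Xi n z' g) X)"
proof -
  let ?K = "ohat_coeff n G p Obs g" and ?D = "(2::nat) ^ n"
  let ?Y = "\<lambda>z. omega_adj ?D g (Zop n z)"
  have "(\<Sum>x<?D. omega ?D g X x x * (ohat n G p Obs g x)\<^sup>2) =
      (\<Sum>x<?D. \<Sum>z\<in>zidx n. \<Sum>z'\<in>zidx n. ?K z * ?K z' * (Zop n z x x * Zop n z' x x * omega ?D g X x x))"
    by (intro sum.cong refl)
      (simp add: ohat_eq_sum_Zop[OF fin cl pn S clg] power2_eq_square sum_product sum_distrib_left mult_ac)
  also have "\<dots> = (\<Sum>z\<in>zidx n. \<Sum>z'\<in>zidx n. ?K z * ?K z' *
                      (\<Sum>x<?D. Zop n z x x * Zop n z' x x * omega ?D g X x x))"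
    by (subst sum.swap, intro sum.cong refl, subst sum.swap) (simp add: sum_distrib_left)
  also have "\<dots> = (\<Sum>z\<in>zidx n. \<Sum>z'\<in>zidx n. ?K z * ?K z' * tr ?D (mmul ?D (mmul ?D (?Y z) (?Y z')) X))"
  proof (intro sum.cong refl)
    fix z z' assume "z \<in> zidx n" "z' \<in> zidx n"
    then have "(\<Sum>x<?D. Zop n z x x * Zop n z' x x * omega ?D g X x x) =
               tr ?D (mmul ?D (mmul ?D (Zop n z) (Zop n z')) (omega ?D g X))"
      by (simp add: tr_mmul_diag diag_Zop zidx_def)
    also have "\<dots> = tr ?D (mmul ?D (mmul ?D (?Y z) (?Y z')) X)"
      by (simp add: omega_adj_mmul[OF clifford_unitary[OF clg]] tr_omega_adj)
    finally show "?K z * ?K z' * (\<Sum>x<?D. Zop n z x x * Zop n z' x x * omega ?D g X x x) =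
                  ?K z * ?K z' * tr ?D (mmul ?D (mmul ?D (?Y z) (?Y z')) X)" by simp
  qed
  finally show ?thesis by (simp add: ohat_coeff_pair[OF clg])
qed

lemma second_moment_eq:
  assumes fin: "finite G" and cl: "\<forall>g\<in>G. clifford n g" and pn: "\<forall>g\<in>G. p g \<ge> 0"
    and S: "bij_betw (Sop n G p) (mats (2 ^ n)) (mats (2 ^ n))"
  shows "second_moment n G p \<Lambda> Obs \<rho> = (\<Sum>g\<in>G. complex_of_real (p g) *
      (\<Sum>z\<in>zidx n. \<Sum>z'\<in>zidx n. shadow_coeff n G p Obs (Xi n z g) * shadow_coeff n G p Obs (Xi n z' g) *
         pauli_pair_tr n (Xi n z g) (Xi n z' g) (\<Lambda> g \<rho>)))"
  unfolding second_moment_def using cl by (intro sum.cong refl) (simp add: sum_ohat_sq[OF fin cl pn S])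

section \<open>Vector and operator norms\<close>

lemma vnorm_eq_L2_set: "vnorm D v = L2_set (\<lambda>i. cmod (v i)) {..<D}"
  by (simp add: vnorm_def L2_set_def)

lemma vnorm_nonneg: "vnorm D v \<ge> 0"
  by (simp add: vnorm_eq_L2_set)

lemma vnorm_sq: "(vnorm D v)\<^sup>2 = (\<Sum>i<D. (cmod (v i))\<^sup>2)"
  unfolding vnorm_def by (simp add: sum_nonneg)

lemma cmod_le_vnorm: "i < D \<Longrightarrow> cmod (v i) \<le> vnorm D v"
  unfolding vnorm_eq_L2_set by (rule member_le_L2_set) auto

lemma vnorm_le_sum: "vnorm D v \<le> (\<Sum>i<D. cmod (v i))"
  unfolding vnorm_eq_L2_set by (rule L2_set_le_sum) simp

lemma sum_cmod_mult_le_vnorm: "(\<Sum>i<D. cmod (u i) * cmod (w i)) \<le> vnorm D u * vnorm D w"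
  using L2_set_mult_ineq[of "\<lambda>i. cmod (u i)" "\<lambda>i. cmod (w i)" "{..<D}"] by (simp add: vnorm_eq_L2_set)

lemma vnorm_eq_0_iff: "vnorm D v = 0 \<longleftrightarrow> (\<forall>i<D. v i = 0)"
  by (auto simp: vnorm_eq_L2_set L2_set_eq_0_iff)

lemma vnorm_cong: "(\<And>i. i < D \<Longrightarrow> u i = v i) \<Longrightarrow> vnorm D u = vnorm D v"
  unfolding vnorm_def by (rule arg_cong[where f=sqrt], rule sum.cong) auto

lemma vnorm_scale: "vnorm D (\<lambda>i. c * v i) = cmod c * vnorm D v"
  by (simp add: vnorm_eq_L2_set norm_mult L2_set_right_distrib)

lemma vnorm_mono: "d \<le> D \<Longrightarrow> vnorm d v \<le> vnorm D v"
  unfolding vnorm_def by (intro real_sqrt_le_mono sum_mono2) auto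

lemma vnorm_restrict: "(\<And>i. d \<le> i \<Longrightarrow> v i = 0) \<Longrightarrow> d \<le> D \<Longrightarrow> vnorm D v = vnorm d v"
  unfolding vnorm_def by (intro arg_cong[where f=sqrt] sum.mono_neutral_right) auto

definition vinner :: "nat \<Rightarrow> (nat \<Rightarrow> complex) \<Rightarrow> (nat \<Rightarrow> complex) \<Rightarrow> complex" where
  "vinner D u w = (\<Sum>i<D. cnj (u i) * w i)"

lemma vinner_cauchy_schwarz: "cmod (vinner D u w) \<le> vnorm D u * vnorm D w"
proof -
  have "cmod (vinner D u w) \<le> (\<Sum>i<D. cmod (u i) * cmod (w i))"
    unfolding vinner_def using norm_sum[of "\<lambda>i. cnj (u i) * w i"] by (simp add: norm_mult)
  also have "\<dots> \<le> vnorm D u * vnorm D w" by (rule sum_cmod_mult_le_vnorm)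
  finally show ?thesis .
qed

lemma vinner_self: "vinner D v v = complex_of_real ((vnorm D v)\<^sup>2)"
  unfolding vinner_def vnorm_sq of_real_sum
  by (intro sum.cong refl) (metis complex_norm_square mult.commute)

lemma vinner_cong: "(\<And>i. i < D \<Longrightarrow> w i = w' i) \<Longrightarrow> vinner D u w = vinner D u w'"
  unfolding vinner_def by (rule sum.cong) auto

lemma vinner_mvec_left: "vinner D (mvec D A u) w = vinner D u (mvec D (adj A) w)"
proof -
  have "vinner D (mvec D A u) w = (\<Sum>i<D. \<Sum>k<D. cnj (u k) * (cnj (A i k) * w i))"
    unfolding vinner_def mvec_def by (auto simp: sum_distrib_right sum_distrib_left mult_ac intro!: sum.cong)
  also have "\<dots> = (\<Sum>k<D. \<Sum>i<D. cnj (u k) * (cnj (A i k) * w i))" by (rule sum.swap)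
  also have "\<dots> = vinner D u (mvec D (adj A) w)"
    unfolding vinner_def mvec_def adj_def by (auto simp: sum_distrib_left intro!: sum.cong)
  finally show ?thesis .
qed

lemma mvec_mmul: "mvec D (mmul D A B) v = mvec D A (mvec D B v)"
proof (intro ext)
  fix i
  show "mvec D (mmul D A B) v i = mvec D A (mvec D B v) i"
  proof (cases "i < D")
    case True
    have "mvec D (mmul D A B) v i = (\<Sum>k<D. \<Sum>l<D. A i l * (B l k * v k))"
      using True unfolding mvec_def mmul_def
      by (auto simp: sum_distrib_right sum_distrib_left mult_ac intro!: sum.cong)
    also have "\<dots> = (\<Sum>l<D. \<Sum>k<D. A i l * (B l k * v k))" by (rule sum.swap)
    also have "\<dots> = mvec D A (mvec D B v) i"
      using True unfolding mvec_def by (auto simp: sum_distrib_left intro!: sum.cong)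
    finally show ?thesis .
  qed (simp add: mvec_def)
qed

lemma mvec_scale: "mvec D W (\<lambda>i. c * v i) = (\<lambda>i. c * mvec D W v i)"
  by (auto simp: mvec_def sum_distrib_left mult_ac intro!: ext)

lemma vnorm_mvec_le_entries: "vnorm D (mvec D W v) \<le> (\<Sum>i<D. \<Sum>k<D. cmod (W i k)) * vnorm D v"
proof -
  have "vnorm D (mvec D W v) \<le> (\<Sum>i<D. cmod (mvec D W v i))" by (rule vnorm_le_sum)
  also have "\<dots> \<le> (\<Sum>i<D. \<Sum>k<D. cmod (W i k) * vnorm D v)"
  proof (rule sum_mono)
    fix i assume i: "i \<in> {..<D}"
    have "cmod (mvec D W v i) \<le> (\<Sum>k<D. cmod (W i k * v k))" using i by (simp add: mvec_def norm_sum)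
    also have "\<dots> \<le> (\<Sum>k<D. cmod (W i k) * vnorm D v)"
      by (intro sum_mono) (simp add: norm_mult cmod_le_vnorm mult_left_mono)
    finally show "cmod (mvec D W v i) \<le> (\<Sum>k<D. cmod (W i k) * vnorm D v)" .
  qed
  also have "\<dots> = (\<Sum>i<D. \<Sum>k<D. cmod (W i k)) * vnorm D v" by (simp add: sum_distrib_right)
  finally show ?thesis .
qed

lemma opnorm_bdd: "bdd_above {vnorm D (mvec D W v) | v. vnorm D v \<le> 1}"
proof (rule bdd_aboveI)
  fix x assume "x \<in> {vnorm D (mvec D W v) | v. vnorm D v \<le> 1}"
  then obtain v where v: "x = vnorm D (mvec D W v)" "vnorm D v \<le> 1" by blast
  have K: "0 \<le> (\<Sum>i<D. \<Sum>k<D. cmod (W i k))" by (intro sum_nonneg) auto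
  have "x \<le> (\<Sum>i<D. \<Sum>k<D. cmod (W i k)) * vnorm D v" using v vnorm_mvec_le_entries by simp
  also have "\<dots> \<le> (\<Sum>i<D. \<Sum>k<D. cmod (W i k))" using v(2) K by (simp add: mult_left_le)
  finally show "x \<le> (\<Sum>i<D. \<Sum>k<D. cmod (W i k))" .
qed

lemma opnorm_upper: "vnorm D v \<le> 1 \<Longrightarrow> vnorm D (mvec D W v) \<le> opnorm D W"
  unfolding opnorm_def by (rule cSup_upper[OF _ opnorm_bdd]) blast

lemma opnorm_least: "(\<And>v. vnorm D v \<le> 1 \<Longrightarrow> vnorm D (mvec D W v) \<le> c) \<Longrightarrow> opnorm D W \<le> c"
  unfolding opnorm_def
proof (rule cSup_least)
  have "vnorm D (\<lambda>i. 0) \<le> 1" by (simp add: vnorm_def)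
  then show "{vnorm D (mvec D W v) |v. vnorm D v \<le> 1} \<noteq> {}" by blast
qed auto

lemma opnorm_mult: "vnorm D (mvec D W v) \<le> opnorm D W * vnorm D v"
proof (cases "vnorm D v = 0")
  case True
  then have "vnorm D (mvec D W v) = 0" by (simp add: vnorm_eq_0_iff mvec_def)
  then show ?thesis using True by simp
next
  case False
  let ?c = "complex_of_real (1 / vnorm D v)"
  have pos: "vnorm D v > 0" using False vnorm_nonneg[of D v] by simp
  then have "vnorm D (\<lambda>i. ?c * v i) = 1" unfolding vnorm_scale by (simp add: norm_divide)
  then have "vnorm D (mvec D W (\<lambda>i. ?c * v i)) \<le> opnorm D W" by (simp add: opnorm_upper)
  then have "(1 / vnorm D v) * vnorm D (mvec D W v) \<le> opnorm D W"
    unfolding mvec_scale vnorm_scale using pos by (simp add: norm_divide)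
  then show ?thesis using pos by (simp add: field_simps)
qed

lemma cmod_entry_le_opnorm:
  assumes i: "i < D" and k: "k < D"
  shows "cmod (W i k) \<le> opnorm D W"
proof -
  let ?e = "\<lambda>j. if j = k then 1 else (0::complex)"
  have "(\<Sum>j<D. (cmod (?e j))\<^sup>2) = (\<Sum>j<D. if j = k then 1 else 0)" by (rule sum.cong) auto
  then have "vnorm D ?e = 1" using k by (simp add: vnorm_def)
  then have "vnorm D (mvec D W ?e) \<le> opnorm D W" by (simp add: opnorm_upper)
  moreover have "mvec D W ?e i = W i k" using i k by (simp add: mvec_def if_distrib[of "\<lambda>x. _ * x"] cong: if_cong)
  ultimately show ?thesis using cmod_le_vnorm[OF i, of "mvec D W ?e"] by simp
qed

lemma vnorm_mvec_sq: "(vnorm D (mvec D A v))\<^sup>2 = Re (vinner D v (mvec D (mmul D (adj A) A) v))"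
proof -
  have "complex_of_real ((vnorm D (mvec D A v))\<^sup>2) = vinner D (mvec D A v) (mvec D A v)"
    by (simp only: vinner_self)
  also have "\<dots> = vinner D v (mvec D (mmul D (adj A) A) v)"
    by (simp only: vinner_mvec_left mvec_mmul)
  finally have "complex_of_real ((vnorm D (mvec D A v))\<^sup>2) = vinner D v (mvec D (mmul D (adj A) A) v)" .
  then show ?thesis by (metis Re_complex_of_real)
qed

lemma unitary_opnorm: "unitary D U \<Longrightarrow> opnorm D U \<le> 1"
proof (rule opnorm_least)
  fix v assume U: "unitary D U" and v: "vnorm D v \<le> 1"
  have "vinner D v (mvec D (idm D) v) = vinner D v v"
    by (rule vinner_cong) (simp add: mvec_def idm_def if_distrib[of "\<lambda>x. x * _"] cong: if_cong)
  then have "(vnorm D (mvec D U v))\<^sup>2 = (vnorm D v)\<^sup>2"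
    using U by (simp add: vnorm_mvec_sq unitary_def vinner_self)
  then have "vnorm D (mvec D U v) = vnorm D v"
    using power2_eq_iff_nonneg[OF vnorm_nonneg vnorm_nonneg] by blast
  then show "vnorm D (mvec D U v) \<le> 1" using v by simp
qed

lemma opnorm_mmul_adj_self:
  assumes B: "opnorm D B \<le> 1"
  shows "opnorm D (mmul D B (adj B)) \<le> 1"
proof (rule opnorm_least)
  fix v assume v: "vnorm D v \<le> 1"
  let ?w = "mvec D (adj B) v"
  have Bw: "vnorm D (mvec D B u) \<le> vnorm D u" for u
    using opnorm_mult[of D B u] mult_right_mono[OF B vnorm_nonneg[of D u]] by simp
  have "(vnorm D ?w)\<^sup>2 = Re (vinner D v (mvec D (mmul D (adj (adj B)) (adj B)) v))" by (rule vnorm_mvec_sq)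
  also have "\<dots> \<le> cmod (vinner D v (mvec D B ?w))" by (simp add: complex_Re_le_cmod mvec_mmul)
  also have "\<dots> \<le> vnorm D v * vnorm D (mvec D B ?w)" by (rule vinner_cauchy_schwarz)
  also have "\<dots> \<le> vnorm D v * vnorm D ?w" by (intro mult_left_mono Bw vnorm_nonneg)
  finally have "vnorm D ?w * vnorm D ?w \<le> vnorm D v * vnorm D ?w" by (simp add: power2_eq_square)
  then have "vnorm D ?w \<le> vnorm D v"
    using vnorm_nonneg[of D ?w] vnorm_nonneg[of D v] by (metis mult_right_le_imp_le order_le_less)
  then show "vnorm D (mvec D (mmul D B (adj B)) v) \<le> 1"
    using Bw[of ?w] v by (simp add: mvec_mmul)
qed

lemma opnorm_restrict_le:
  assumes dD: "d \<le> D"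
  shows "opnorm d B \<le> opnorm D B"
proof (rule opnorm_least)
  fix v assume v: "vnorm d v \<le> 1"
  let ?v = "\<lambda>i. if i < d then v i else 0"
  have "vnorm D ?v = vnorm d ?v" using dD by (intro vnorm_restrict) auto
  also have "\<dots> = vnorm d v" by (intro vnorm_cong) auto
  finally have v1: "vnorm D ?v \<le> 1" using v by simp
  have "vnorm d (mvec d B v) = vnorm d (mvec D B ?v)"
  proof (rule vnorm_cong)
    fix i assume i: "i < d"
    have "(\<Sum>k<D. B i k * ?v k) = (\<Sum>k<d. B i k * v k)"
      using dD by (subst sum.mono_neutral_right[of "{..<D}" "{..<d}"]) auto
    then show "mvec d B v i = mvec D B ?v i" using i dD by (simp add: mvec_def)
  qed
  also have "\<dots> \<le> vnorm D (mvec D B ?v)" using dD by (rule vnorm_mono)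
  also have "\<dots> \<le> opnorm D B" using v1 by (rule opnorm_upper)
  finally show "vnorm d (mvec d B v) \<le> opnorm D B" .
qed

lemma opnorm_extend_le:
  assumes dD: "d \<le> D" and W: "W \<in> mats d" and Wn: "opnorm d W \<le> 1"
  shows "opnorm D W \<le> 1"
proof (rule opnorm_least)
  fix v assume v: "vnorm D v \<le> 1"
  have "vnorm D (mvec D W v) = vnorm d (mvec D W v)"
    using W by (intro vnorm_restrict dD) (auto simp: mvec_def mats_def)
  also have "\<dots> = vnorm d (mvec d W v)"
  proof (rule vnorm_cong)
    fix i assume i: "i < d"
    have "(\<Sum>k<D. W i k * v k) = (\<Sum>k<d. W i k * v k)"
      using dD W by (intro sum.mono_neutral_right) (auto simp: mats_def)
    then show "mvec D W v i = mvec d W v i" using i dD by (simp add: mvec_def)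
  qed
  also have "\<dots> \<le> opnorm d W * vnorm d v" by (rule opnorm_mult)
  also have "\<dots> \<le> 1 * vnorm d v" using Wn by (intro mult_right_mono vnorm_nonneg)
  also have "\<dots> \<le> vnorm D v" using dD by (simp add: vnorm_mono)
  finally show "vnorm D (mvec D W v) \<le> 1" using v by simp
qed

section \<open>Positive semidefinite matrices and states\<close>

definition qform :: "nat \<Rightarrow> cmat \<Rightarrow> (nat \<Rightarrow> complex) \<Rightarrow> (nat \<Rightarrow> complex) \<Rightarrow> complex" where
  "qform D R u w = (\<Sum>i<D. \<Sum>j<D. cnj (u i) * R i j * w j)"

lemma psd_qform: "psd D R \<Longrightarrow> Im (qform D R v v) = 0 \<and> Re (qform D R v v) \<ge> 0"
  unfolding psd_def qform_def Let_def by blast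

lemma qform_add_scaled:
  "qform D R (\<lambda>i. u i + c * w i) (\<lambda>i. u i + c * w i) =
     qform D R u u + c * qform D R u w + cnj c * qform D R w u + cnj c * c * qform D R w w"
  unfolding qform_def by (simp add: algebra_simps sum.distrib sum_distrib_left)

lemma psd_qform_swap:
  assumes R: "psd D R"
  shows "qform D R w u = cnj (qform D R u w)"
proof -
  have "Im (qform D R (\<lambda>i. u i + c * w i) (\<lambda>i. u i + c * w i)) = 0" for c
    using psd_qform[OF R] by blast
  from this[of 1] this[of \<i>] psd_qform[OF R, of u] psd_qform[OF R, of w] show ?thesis
    unfolding qform_add_scaled by (simp add: complex_eq_iff)
qed

lemma le_mult_if_quadratic_nonneg:
  fixes A B C :: real
  assumes q: "\<And>t. 0 \<le> A - 2 * t * B + t\<^sup>2 * B * C" and "0 \<le> A" "0 \<le> B" "0 \<le> C"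
  shows "B \<le> A * C"
proof (cases "B = 0")
  case False
  show ?thesis
  proof (cases "C = 0")
    case True
    with q[of "(A + 1) / (2 * B)"] False show ?thesis by (simp add: field_simps)
  next
    case False
    with q[of "1 / C"] assms show ?thesis by (simp add: field_simps power2_eq_square)
  qed
qed (use assms in simp)

lemma psd_qform_cauchy_schwarz:
  assumes R: "psd D R"
  shows "(cmod (qform D R u w))\<^sup>2 \<le> Re (qform D R u u) * Re (qform D R w w)"
proof -
  define A C where "A = Re (qform D R u u)" and "C = Re (qform D R w w)"
  let ?b = "qform D R u w"
  let ?B = "(cmod ?b)\<^sup>2"
  have uu: "qform D R u u = complex_of_real A" and ww: "qform D R w w = complex_of_real C"
    using psd_qform[OF R] by (simp_all add: A_def C_def complex_eq_iff)
  have "0 \<le> A - 2 * t * ?B + t\<^sup>2 * ?B * C" for t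
  proof -
    let ?c = "- complex_of_real t * cnj ?b"
    have cb: "?c * ?b = - complex_of_real (t * ?B)"
      unfolding mult.assoc by (metis complex_norm_square mult.commute of_real_mult mult_minus_left)
    have ccb: "cnj ?c * cnj ?b = - complex_of_real (t * ?B)"
      by (simp only: complex_cnj_mult[symmetric] cb) simp
    have "cnj ?c * ?c = complex_of_real ((cmod ?c)\<^sup>2)" by (metis complex_norm_square mult.commute)
    also have "(cmod ?c)\<^sup>2 = t\<^sup>2 * ?B" by (simp add: norm_mult power_mult_distrib)
    finally have cc: "cnj ?c * ?c = complex_of_real (t\<^sup>2 * ?B)" .
    have "Re (qform D R (\<lambda>i. u i + ?c * w i) (\<lambda>i. u i + ?c * w i)) = A - 2 * t * ?B + t\<^sup>2 * ?B * C"
      unfolding qform_add_scaled psd_qform_swap[OF R, of w u] uu ww cb ccb cc by simp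
    then show ?thesis using psd_qform[OF R, of "\<lambda>i. u i + ?c * w i"] by linarith
  qed
  then show ?thesis
    using psd_qform[OF R] unfolding A_def C_def by (intro le_mult_if_quadratic_nonneg) auto
qed

definition col :: "cmat \<Rightarrow> nat \<Rightarrow> nat \<Rightarrow> complex" where
  "col B i = (\<lambda>k. B k i)"

definition basis_vec :: "nat \<Rightarrow> nat \<Rightarrow> complex" where
  "basis_vec i = (\<lambda>k. if k = i then 1 else 0)"

lemma qform_basis_vec_right: "i < D \<Longrightarrow> qform D R u (basis_vec i) = (\<Sum>k<D. cnj (u k) * R k i)"
  unfolding qform_def basis_vec_def
  by (simp add: if_distrib[of "\<lambda>x. _ * x"] sum.delta' cong: if_cong)

lemma hs_eq_sum_qform: "hs D B R = (\<Sum>i<D. qform D R (col B i) (basis_vec i))"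
  by (simp add: hs_def tr_def mmul_def adj_def qform_basis_vec_right col_def)

lemma tr_eq_sum_qform: "tr D R = (\<Sum>i<D. qform D R (basis_vec i) (basis_vec i))"
proof -
  have "qform D R (basis_vec i) (basis_vec i) = R i i" if "i < D" for i
  proof -
    have "qform D R (basis_vec i) (basis_vec i) = (\<Sum>k<D. cnj (basis_vec i k) * R k i)"
      using that by (rule qform_basis_vec_right)
    also have "\<dots> = (\<Sum>k<D. if k = i then R k i else 0)" by (rule sum.cong) (auto simp: basis_vec_def)
    finally show ?thesis using that by simp
  qed
  then show ?thesis by (simp add: tr_def)
qed

lemma hs_mmul_adj_eq_sum_qform: "hs D (mmul D B (adj B)) R = (\<Sum>i<D. qform D R (col B i) (col B i))"
proof -
  have "hs D (mmul D B (adj B)) R = (\<Sum>j<D. \<Sum>k<D. \<Sum>i<D. cnj (B k i) * R k j * B j i)"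
    unfolding hs_def adj_mmul adj_adj tr_def mmul_def
    by (auto simp: adj_def sum_distrib_right sum_distrib_left mult_ac intro!: sum.cong)
  also have "\<dots> = (\<Sum>i<D. \<Sum>k<D. \<Sum>j<D. cnj (B k i) * R k j * B j i)"
    by (subst sum.swap, subst (2) sum.swap, rule sum.cong, simp, rule sum.swap)
  finally show ?thesis by (simp add: qform_def col_def)
qed

lemma sum_sqrt_mult_le:
  fixes a b :: "nat \<Rightarrow> real"
  assumes "\<And>i. 0 \<le> a i" "\<And>i. 0 \<le> b i"
  shows "(\<Sum>i<D. sqrt (a i) * sqrt (b i)) \<le> sqrt (\<Sum>i<D. a i) * sqrt (\<Sum>i<D. b i)"
  using L2_set_mult_ineq[of "\<lambda>i. sqrt (a i)" "\<lambda>i. sqrt (b i)" "{..<D}"] assms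
  by (simp add: L2_set_def)

lemma state_hs_le_sqrt:
  assumes R: "psd D R" and trR: "tr D R = 1"
  shows "cmod (hs D B R) \<le> sqrt (Re (hs D (mmul D B (adj B)) R))"
proof -
  have nn: "0 \<le> Re (qform D R v v)" for v using psd_qform[OF R] by blast
  have "cmod (hs D B R) \<le> (\<Sum>i<D. cmod (qform D R (col B i) (basis_vec i)))"
    unfolding hs_eq_sum_qform by (rule norm_sum)
  also have "\<dots> \<le> (\<Sum>i<D. sqrt (Re (qform D R (col B i) (col B i))) * sqrt (Re (qform D R (basis_vec i) (basis_vec i))))"
    using psd_qform_cauchy_schwarz[OF R] nn
    by (intro sum_mono) (simp add: real_le_rsqrt flip: real_sqrt_mult)
  also have "\<dots> \<le> sqrt (\<Sum>i<D. Re (qform D R (col B i) (col B i))) *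
                    sqrt (\<Sum>i<D. Re (qform D R (basis_vec i) (basis_vec i)))"
    by (rule sum_sqrt_mult_le) (rule nn)+
  also have "(\<Sum>i<D. Re (qform D R (basis_vec i) (basis_vec i))) = 1"
    using trR by (simp add: tr_eq_sum_qform flip: Re_sum)
  also have "(\<Sum>i<D. Re (qform D R (col B i) (col B i))) = Re (hs D (mmul D B (adj B)) R)"
    by (simp add: hs_mmul_adj_eq_sum_qform)
  finally show ?thesis by simp
qed

lemma cmod_hs_le_sum_entries: "opnorm D B \<le> 1 \<Longrightarrow> cmod (hs D B R) \<le> (\<Sum>i<D. \<Sum>k<D. cmod (R k i))"
proof -
  assume B: "opnorm D B \<le> 1"
  have "cmod (hs D B R) \<le> (\<Sum>i<D. \<Sum>k<D. cmod (B k i) * cmod (R k i))"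
    unfolding hs_def tr_def mmul_def adj_def
    by (simp, intro order_trans[OF norm_sum] sum_mono) (simp add: norm_mult order_trans[OF norm_sum])
  also have "\<dots> \<le> (\<Sum>i<D. \<Sum>k<D. cmod (R k i))"
    using B cmod_entry_le_opnorm[of _ D _ B] by (intro sum_mono mult_left_le_one_le) force+
  finally show ?thesis .
qed

text \<open>Without spectral theory: the supremum M of |Tr(B^dagger rho)| over contractions B satisfies
  M <= sqrt M, because B B^dagger is again a contraction.\<close>

lemma state_hs_le_one:
  assumes R: "psd D R" and trR: "tr D R = 1" and B: "opnorm D B \<le> 1"
  shows "cmod (hs D B R) \<le> 1"
proof -
  define S where "S = {cmod (hs D B' R) | B'. opnorm D B' \<le> 1}"
  define M where "M = Sup S"
  have bdd: "bdd_above S" unfolding S_def using cmod_hs_le_sum_entries by (intro bdd_aboveI) blast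
  have zero: "opnorm D (\<lambda>i j. 0) \<le> 1"
    by (rule opnorm_least) (simp add: mvec_def vnorm_def)
  have upper: "cmod (hs D B' R) \<le> M" if "opnorm D B' \<le> 1" for B'
    unfolding M_def by (rule cSup_upper[OF _ bdd]) (use that S_def in blast)
  have M0: "0 \<le> M" using upper[OF zero] by (meson norm_ge_zero order_trans)
  have "M \<le> sqrt M"
    unfolding M_def
  proof (rule cSup_least)
    show "S \<noteq> {}" using zero S_def by blast
  next
    fix x assume "x \<in> S"
    then obtain B' where x: "x = cmod (hs D B' R)" and B': "opnorm D B' \<le> 1" unfolding S_def by blast
    have "x \<le> sqrt (Re (hs D (mmul D B' (adj B')) R))" unfolding x by (rule state_hs_le_sqrt[OF R trR])
    also have "\<dots> \<le> sqrt (cmod (hs D (mmul D B' (adj B')) R))" by (simp add: complex_Re_le_cmod)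
    also have "\<dots> \<le> sqrt M" using upper[OF opnorm_mmul_adj_self[OF B']] by simp
    finally show "x \<le> sqrt (Sup S)" unfolding M_def .
  qed
  then have "M * M \<le> M * 1" using M0 mult_mono[of M "sqrt M" M "sqrt M"] by simp
  then have "M \<le> 1" using M0 by (cases "M = 0") auto
  then show ?thesis using upper[OF B] by linarith
qed

section \<open>Trace norm and diamond norm\<close>

lemma opnorm_zero: "opnorm D (\<lambda>i j. 0) \<le> 1"
  by (rule opnorm_least) (simp add: mvec_def vnorm_def)

lemma zero_mats: "(\<lambda>i j. 0) \<in> mats D"
  by (simp add: mats_def)

lemma mats_mono: "X \<in> mats d \<Longrightarrow> d \<le> D \<Longrightarrow> X \<in> mats D"
  by (auto simp: mats_def)

lemma tnorm_bdd: "bdd_above {cmod (hs D B X) | B. B \<in> mats D \<and> opnorm D B \<le> 1}"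
  using cmod_hs_le_sum_entries by (intro bdd_aboveI) blast

lemma tnorm_upper: "B \<in> mats D \<Longrightarrow> opnorm D B \<le> 1 \<Longrightarrow> cmod (hs D B X) \<le> tnorm D X"
  unfolding tnorm_def by (rule cSup_upper[OF _ tnorm_bdd]) blast

lemma tnorm_least:
  "(\<And>B. B \<in> mats D \<Longrightarrow> opnorm D B \<le> 1 \<Longrightarrow> cmod (hs D B X) \<le> c) \<Longrightarrow> tnorm D X \<le> c"
  unfolding tnorm_def
proof (rule cSup_least)
  show "{cmod (hs D B X) |B. B \<in> mats D \<and> opnorm D B \<le> 1} \<noteq> {}"
    using opnorm_zero zero_mats by blast
qed auto

lemma tnorm_nonneg: "tnorm D X \<ge> 0"
  using tnorm_upper[OF zero_mats opnorm_zero, of D X] norm_ge_zero order_trans by blast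

lemma tnorm_zero: "tnorm D (\<lambda>i j. 0) = 0"
proof -
  have "tnorm D (\<lambda>i j. 0) \<le> 0"
    by (rule tnorm_least) (simp add: hs_def tr_def mmul_def)
  then show ?thesis using tnorm_nonneg[of D "\<lambda>i j. 0"] by simp
qed

lemma tnorm_le_sum_entries: "tnorm D X \<le> (\<Sum>i<D. \<Sum>k<D. cmod (X k i))"
  by (rule tnorm_least) (rule cmod_hs_le_sum_entries)

lemma hs_restrict:
  assumes X: "X \<in> mats d" and dD: "d \<le> D"
  shows "hs D B X = hs d B X"
proof -
  have "hs D B X = (\<Sum>i<D. \<Sum>k<D. cnj (B k i) * X k i)" by (simp add: hs_def tr_def mmul_def adj_def)
  also have "\<dots> = (\<Sum>i<d. \<Sum>k<D. cnj (B k i) * X k i)"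
    using X dD by (intro sum.mono_neutral_right) (auto simp: mats_def intro!: sum.neutral)
  also have "\<dots> = (\<Sum>i<d. \<Sum>k<d. cnj (B k i) * X k i)"
    using X dD by (intro sum.cong refl sum.mono_neutral_right) (auto simp: mats_def)
  also have "\<dots> = hs d B X" by (simp add: hs_def tr_def mmul_def adj_def)
  finally show ?thesis .
qed

lemma tnorm_lin_comb_le:
  assumes w: "\<And>t. t \<in> T \<Longrightarrow> w t \<ge> 0"
  shows "tnorm D (lin_comb T (\<lambda>t. complex_of_real (w t)) Y) \<le> (\<Sum>t\<in>T. w t * tnorm D (Y t))"
proof (rule tnorm_least)
  fix B assume B: "B \<in> mats D" "opnorm D B \<le> 1"
  have "cmod (hs D B (lin_comb T (\<lambda>t. complex_of_real (w t)) Y)) \<le> (\<Sum>t\<in>T. cmod (complex_of_real (w t) * hs D B (Y t)))"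
    unfolding hs_lin_comb by (rule norm_sum)
  also have "\<dots> = (\<Sum>t\<in>T. w t * cmod (hs D B (Y t)))" using w by (intro sum.cong) (auto simp: norm_mult)
  also have "\<dots> \<le> (\<Sum>t\<in>T. w t * tnorm D (Y t))"
    using w tnorm_upper[OF B] by (intro sum_mono mult_left_mono) auto
  finally show "cmod (hs D B (lin_comb T (\<lambda>t. complex_of_real (w t)) Y)) \<le> (\<Sum>t\<in>T. w t * tnorm D (Y t))" .
qed

definition matrix_unit :: "nat \<Rightarrow> nat \<Rightarrow> cmat" where
  "matrix_unit r c = (\<lambda>i j. if i = r \<and> j = c then 1 else 0)"

lemma matrix_unit_mats: "r < D \<Longrightarrow> c < D \<Longrightarrow> matrix_unit r c \<in> mats D"
  by (auto simp: matrix_unit_def mats_def)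

lemma opnorm_matrix_unit: "c < D \<Longrightarrow> opnorm D (matrix_unit r c) \<le> 1"
proof (rule opnorm_least)
  fix v assume c: "c < D" and v: "vnorm D v \<le> 1"
  have "vnorm D (mvec D (matrix_unit r c) v) \<le> (\<Sum>i<D. cmod (mvec D (matrix_unit r c) v i))"
    by (rule vnorm_le_sum)
  also have "\<dots> = (\<Sum>i<D. if i = r then cmod (v c) else 0)"
    using c by (intro sum.cong) (auto simp: mvec_def matrix_unit_def if_distrib[of "\<lambda>x. x * _"] cong: if_cong)
  also have "\<dots> \<le> vnorm D v" using cmod_le_vnorm[OF c, of v] vnorm_nonneg[of D v] by simp
  finally show "vnorm D (mvec D (matrix_unit r c) v) \<le> 1" using v by simp
qed

lemma hs_matrix_unit: "r < D \<Longrightarrow> c < D \<Longrightarrow> hs D (matrix_unit r c) X = X r c"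
proof -
  assume r: "r < D" and c: "c < D"
  have "hs D (matrix_unit r c) X = (\<Sum>i<D. \<Sum>k<D. cnj (matrix_unit r c k i) * X k i)"
    by (simp add: hs_def tr_def mmul_def adj_def)
  also have "\<dots> = (\<Sum>i<D. if i = c then X r c else 0)"
    using r by (intro sum.cong)
      (auto simp: matrix_unit_def if_distrib[of cnj] if_distrib[of "\<lambda>x. x * _"] cong: if_cong)
  finally show ?thesis using c by simp
qed

lemma cmod_entry_le_tnorm: "r < D \<Longrightarrow> c < D \<Longrightarrow> cmod (X r c) \<le> tnorm D X"
  using tnorm_upper[OF matrix_unit_mats opnorm_matrix_unit, of r D c X] hs_matrix_unit by simp

lemma mats_eq_lin_comb_matrix_unit:
  assumes A: "A \<in> mats d"
  shows "A = lin_comb ({..<d} \<times> {..<d}) (\<lambda>(k, l). A k l) (\<lambda>(k, l). matrix_unit k l)"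
proof (intro ext)
  fix i j
  have "lin_comb ({..<d} \<times> {..<d}) (\<lambda>(k, l). A k l) (\<lambda>(k, l). matrix_unit k l) i j =
        (\<Sum>(k, l)\<in>{..<d} \<times> {..<d}. if k = i \<and> l = j then A k l else 0)"
    unfolding lin_comb_def by (intro sum.cong) (auto simp: matrix_unit_def)
  also have "\<dots> = (\<Sum>x\<in>{..<d} \<times> {..<d}. if x = (i, j) then A i j else 0)"
    by (rule sum.cong[OF refl]) (auto split: prod.splits)
  also have "\<dots> = A i j" using A by (auto simp: mats_def)
  finally show "A i j = lin_comb ({..<d} \<times> {..<d}) (\<lambda>(k, l). A k l) (\<lambda>(k, l). matrix_unit k l) i j"
    by simp
qed

lemma lin_superop_zero:
  assumes "lin_superop d \<Phi>"
  shows "\<Phi> (\<lambda>i j. 0) = (\<lambda>i j. 0)"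
proof -
  have "madd (\<lambda>i j. 0) (smul 1 (\<lambda>i j. 0)) = (\<lambda>i j. (0::complex))" by (simp add: madd_def smul_def)
  then have "\<Phi> (\<lambda>i j. 0) = madd (\<Phi> (\<lambda>i j. 0)) (smul 1 (\<Phi> (\<lambda>i j. 0)))"
    using assms zero_mats unfolding lin_superop_def by metis
  then have "\<Phi> (\<lambda>i j. 0) i j = \<Phi> (\<lambda>i j. 0) i j + \<Phi> (\<lambda>i j. 0) i j" for i j
    by (metis madd_def smul_one)
  then show ?thesis by (intro ext) simp
qed

lemma lin_superop_lin_comb:
  assumes lin: "lin_superop d \<Phi>" and fin: "finite S" and A: "\<And>k. k \<in> S \<Longrightarrow> A k \<in> mats d"
  shows "\<Phi> (lin_comb S c A) = lin_comb S c (\<lambda>k. \<Phi> (A k))"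
  using fin A
proof (induction S rule: finite_induct)
  case empty
  then show ?case using lin_superop_zero[OF lin] by (simp add: lin_comb_def)
next
  case (insert x S)
  have m: "lin_comb S c A \<in> mats d" "A x \<in> mats d" using insert by (auto intro: lin_comb_mats)
  have e: "lin_comb (insert x S) c A = madd (lin_comb S c A) (smul (c x) (A x))"
    using insert by (auto simp: lin_comb_def madd_def smul_def intro!: ext)
  have "\<Phi> (lin_comb (insert x S) c A) = madd (\<Phi> (lin_comb S c A)) (smul (c x) (\<Phi> (A x)))"
    unfolding e using lin m unfolding lin_superop_def by blast
  also have "\<dots> = lin_comb (insert x S) c (\<lambda>k. \<Phi> (A k))"
    using insert by (auto simp: lin_comb_def madd_def smul_def intro!: ext)
  finally show ?case .
qed

lemma lin_superop_entry_bound: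
  assumes lin: "lin_superop d \<Phi>" and A: "A \<in> mats d" and b: "\<And>k l. cmod (A k l) \<le> 1"
  shows "cmod (\<Phi> A i j) \<le> (\<Sum>(k, l)\<in>{..<d} \<times> {..<d}. cmod (\<Phi> (matrix_unit k l) i j))"
proof -
  have "\<Phi> A = lin_comb ({..<d} \<times> {..<d}) (\<lambda>(k, l). A k l) (\<lambda>x. \<Phi> ((\<lambda>(k, l). matrix_unit k l) x))"
    by (subst mats_eq_lin_comb_matrix_unit[OF A], rule lin_superop_lin_comb[OF lin])
      (auto simp: matrix_unit_mats)
  then have "cmod (\<Phi> A i j) \<le> (\<Sum>(k, l)\<in>{..<d} \<times> {..<d}. cmod (A k l * \<Phi> (matrix_unit k l) i j))"
    by (simp add: lin_comb_def norm_sum case_prod_unfold)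
  also have "\<dots> \<le> (\<Sum>(k, l)\<in>{..<d} \<times> {..<d}. cmod (\<Phi> (matrix_unit k l) i j))"
    by (intro sum_mono) (auto simp: norm_mult b mult_left_le_one_le)
  finally show ?thesis .
qed

lemma block_index_less:
  assumes "k < d" "i < d"
  shows "k * d + i < d * (d::nat)"
proof -
  have "k * d + i < Suc k * d" using assms(2) by simp
  also have "\<dots> \<le> d * d" using assms(1) by (intro mult_le_mono1) simp
  finally show ?thesis .
qed

lemma tens_id_entry_bound:
  assumes lin: "lin_superop d \<Phi>" and X: "tnorm (d * d) X \<le> 1"
  shows "cmod (tens_id d d \<Phi> X r c) \<le>
         (\<Sum>(a, b)\<in>{..<d} \<times> {..<d}. cmod (\<Phi> (matrix_unit a b) (r mod d) (c mod d)))"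
proof (cases "r < d * d \<and> c < d * d")
  case True
  then have "r div d < d" "c div d < d" by (simp_all add: less_mult_imp_div_less)
  then have "cmod (block d X (r div d) (c div d) i j) \<le> 1" for i j
    using cmod_entry_le_tnorm[OF block_index_less block_index_less, of "r div d" d i "c div d" j X] X
    by (auto simp: block_def)
  moreover have "block d X k l \<in> mats d" for k l by (auto simp: block_def mats_def)
  ultimately show ?thesis
    using True lin_superop_entry_bound[OF lin] by (simp add: tens_id_def)
qed (auto simp: tens_id_def intro: sum_nonneg)

lemma diamond_bdd:
  assumes lin: "lin_superop d \<Phi>"
  shows "bdd_above {tnorm (d * d) (tens_id d d \<Phi> X) | X. X \<in> mats (d * d) \<and> tnorm (d * d) X \<le> 1}"
proof (rule bdd_aboveI)
  fix x assume "x \<in> {tnorm (d * d) (tens_id d d \<Phi> X) | X. X \<in> mats (d * d) \<and> tnorm (d * d) X \<le> 1}"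
  then obtain X where x: "x = tnorm (d * d) (tens_id d d \<Phi> X)" and X: "tnorm (d * d) X \<le> 1" by blast
  have "x \<le> (\<Sum>i<d * d. \<Sum>k<d * d. cmod (tens_id d d \<Phi> X k i))"
    unfolding x by (rule tnorm_le_sum_entries)
  also have "\<dots> \<le> (\<Sum>i<d * d. \<Sum>k<d * d. \<Sum>(a, b)\<in>{..<d} \<times> {..<d}. cmod (\<Phi> (matrix_unit a b) (k mod d) (i mod d)))"
    by (intro sum_mono tens_id_entry_bound[OF lin X])
  finally show "x \<le> (\<Sum>i<d * d. \<Sum>k<d * d. \<Sum>(a, b)\<in>{..<d} \<times> {..<d}. cmod (\<Phi> (matrix_unit a b) (k mod d) (i mod d)))" .
qed

lemma diamond_upper:
  "lin_superop d \<Phi> \<Longrightarrow> X \<in> mats (d * d) \<Longrightarrow> tnorm (d * d) X \<le> 1 \<Longrightarrow>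
     tnorm (d * d) (tens_id d d \<Phi> X) \<le> diamond d \<Phi>"
  unfolding diamond_def by (rule cSup_upper[OF _ diamond_bdd]) blast+

lemma diamond_least:
  "(\<And>X. X \<in> mats (d * d) \<Longrightarrow> tnorm (d * d) X \<le> 1 \<Longrightarrow> tnorm (d * d) (tens_id d d \<Phi> X) \<le> c) \<Longrightarrow>
     diamond d \<Phi> \<le> c"
  unfolding diamond_def
proof (rule cSup_least)
  show "{tnorm (d * d) (tens_id d d \<Phi> X) |X. X \<in> mats (d * d) \<and> tnorm (d * d) X \<le> 1} \<noteq> {}"
    using zero_mats[of "d * d"] tnorm_zero[of "d * d"] by force
qed auto

lemma diamond_nonneg: "lin_superop d \<Phi> \<Longrightarrow> diamond d \<Phi> \<ge> 0"
  using diamond_upper[of d \<Phi> "\<lambda>i j. 0"] zero_mats[of "d * d"] tnorm_zero[of "d * d"]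
    tnorm_nonneg[of "d * d" "tens_id d d \<Phi> (\<lambda>i j. 0)"] by force

lemma diamond_zero: "diamond d (\<lambda>A i j. 0) = 0"
proof -
  have "diamond d (\<lambda>A i j. 0) \<le> 0"
  proof (rule diamond_least)
    fix X
    have "tens_id d d (\<lambda>A i j. 0) X = (\<lambda>i j. 0)" by (auto simp: tens_id_def intro!: ext)
    then show "tnorm (d * d) (tens_id d d (\<lambda>A i j. 0) X) \<le> 0" by (simp add: tnorm_zero)
  qed
  moreover have "lin_superop d (\<lambda>A i j. 0)"
    by (auto simp: lin_superop_def mats_def madd_def smul_def intro!: ext)
  ultimately show ?thesis using diamond_nonneg by (meson order.antisym)
qed

text \<open>A state on the system is embedded as the top-left block of the doubled space, where
  Phi tensor id acts as Phi itself.\<close>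

lemma tens_id_top_left:
  assumes lin: "lin_superop d \<Phi>" and R: "R \<in> mats d"
  shows "tens_id d d \<Phi> R = \<Phi> R"
proof (intro ext)
  fix r c
  have PR: "\<Phi> R \<in> mats d" using lin R by (simp add: lin_superop_def)
  have b00: "block d R 0 0 = R" using R by (auto simp: block_def mats_def intro!: ext)
  have bz: "block d R k l = (\<lambda>i j. 0)" if "k \<noteq> 0 \<or> l \<noteq> 0" for k l
  proof (intro ext)
    fix i j
    have "d \<le> k * d + i \<or> d \<le> l * d + j" using that by (auto simp: trans_le_add1)
    then show "block d R k l i j = 0" using R by (auto simp: block_def mats_def)
  qed
  show "tens_id d d \<Phi> R r c = \<Phi> R r c"
  proof (cases "r < d \<and> c < d")
    case True
    then show ?thesis by (simp add: tens_id_def b00 less_le_trans[of _ d "d * d"])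
  next
    case False
    then have "\<Phi> R r c = 0" using PR by (auto simp: mats_def)
    moreover have "tens_id d d \<Phi> R r c = 0"
    proof (cases "r < d * d \<and> c < d * d")
      case True
      then have "r div d \<noteq> 0 \<or> c div d \<noteq> 0" using False by (auto simp: div_eq_0_iff)
      then show ?thesis using True bz lin_superop_zero[OF lin] by (simp add: tens_id_def)
    qed (auto simp: tens_id_def)
    ultimately show ?thesis by simp
  qed
qed

lemma cmod_hs_state_le_diamond:
  assumes lin: "lin_superop d \<Phi>" and R: "psd d \<rho>" and trR: "tr d \<rho> = 1"
    and W: "W \<in> mats d" and Wn: "opnorm d W \<le> 1" and d1: "1 \<le> d"
  shows "cmod (hs d W (\<Phi> \<rho>)) \<le> diamond d \<Phi>"
proof -
  have dd: "d \<le> d * d" using d1 by simp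
  have Rm: "\<rho> \<in> mats d" using R by (simp add: psd_def)
  have PR: "\<Phi> \<rho> \<in> mats d" using lin Rm by (simp add: lin_superop_def)
  have t1: "tnorm (d * d) \<rho> \<le> 1"
  proof (rule tnorm_least)
    fix B assume B: "B \<in> mats (d * d)" "opnorm (d * d) B \<le> 1"
    have "opnorm d B \<le> 1" using opnorm_restrict_le[OF dd, of B] B(2) by simp
    then have "cmod (hs d B \<rho>) \<le> 1" by (rule state_hs_le_one[OF R trR])
    then show "cmod (hs (d * d) B \<rho>) \<le> 1" using hs_restrict[OF Rm dd] by simp
  qed
  have "cmod (hs d W (\<Phi> \<rho>)) = cmod (hs (d * d) W (\<Phi> \<rho>))" using hs_restrict[OF PR dd] by simp
  also have "\<dots> \<le> tnorm (d * d) (\<Phi> \<rho>)"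
    by (rule tnorm_upper[OF mats_mono[OF W dd] opnorm_extend_le[OF dd W Wn]])
  also have "\<dots> = tnorm (d * d) (tens_id d d \<Phi> \<rho>)" using tens_id_top_left[OF lin Rm] by simp
  also have "\<dots> \<le> diamond d \<Phi>" by (rule diamond_upper[OF lin mats_mono[OF Rm dd] t1])
  finally show ?thesis .
qed

lemma lin_superop_sum:
  assumes lin: "\<And>t. t \<in> T \<Longrightarrow> lin_superop d (\<Phi> t)"
  shows "lin_superop d (\<lambda>A i j. \<Sum>t\<in>T. c t * \<Phi> t A i j)"
  unfolding lin_superop_def
proof (intro conjI ballI allI)
  fix A assume A: "A \<in> mats d"
  then show "(\<lambda>i j. \<Sum>t\<in>T. c t * \<Phi> t A i j) \<in> mats d"
    using lin by (auto simp: mats_def lin_superop_def)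
next
  fix A B a assume A: "A \<in> mats d" and B: "B \<in> mats d"
  have e: "\<Phi> t (madd A (smul a B)) = madd (\<Phi> t A) (smul a (\<Phi> t B))" if "t \<in> T" for t
    using lin[OF that] A B by (simp add: lin_superop_def)
  show "(\<lambda>i j. \<Sum>t\<in>T. c t * \<Phi> t (madd A (smul a B)) i j) =
        madd (\<lambda>i j. \<Sum>t\<in>T. c t * \<Phi> t A i j) (smul a (\<lambda>i j. \<Sum>t\<in>T. c t * \<Phi> t B i j))"
  proof (intro ext)
    fix i j
    have "(\<Sum>t\<in>T. c t * \<Phi> t (madd A (smul a B)) i j) = (\<Sum>t\<in>T. c t * madd (\<Phi> t A) (smul a (\<Phi> t B)) i j)"
      by (rule sum.cong) (simp_all only: e)
    also have "\<dots> = (\<Sum>t\<in>T. c t * \<Phi> t A i j) + a * (\<Sum>t\<in>T. c t * \<Phi> t B i j)"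
      by (simp add: madd_def smul_def sum.distrib sum_distrib_left algebra_simps)
    finally show "(\<Sum>t\<in>T. c t * \<Phi> t (madd A (smul a B)) i j) =
        madd (\<lambda>i j. \<Sum>t\<in>T. c t * \<Phi> t A i j) (smul a (\<lambda>i j. \<Sum>t\<in>T. c t * \<Phi> t B i j)) i j"
      by (simp add: madd_def smul_def)
  qed
qed

lemma diamond_sum_le:
  assumes w: "\<And>t. t \<in> T \<Longrightarrow> w t \<ge> 0" and lin: "\<And>t. t \<in> T \<Longrightarrow> lin_superop d (\<Phi> t)"
  shows "diamond d (\<lambda>A i j. \<Sum>t\<in>T. complex_of_real (w t) * \<Phi> t A i j) \<le> (\<Sum>t\<in>T. w t * diamond d (\<Phi> t))"
proof (rule diamond_least)
  fix X assume X: "X \<in> mats (d * d)" "tnorm (d * d) X \<le> 1"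
  have "tens_id d d (\<lambda>A i j. \<Sum>t\<in>T. complex_of_real (w t) * \<Phi> t A i j) X =
        lin_comb T (\<lambda>t. complex_of_real (w t)) (\<lambda>t. tens_id d d (\<Phi> t) X)"
    by (auto simp: tens_id_def lin_comb_def intro!: ext)
  then have "tnorm (d * d) (tens_id d d (\<lambda>A i j. \<Sum>t\<in>T. complex_of_real (w t) * \<Phi> t A i j) X)
      \<le> (\<Sum>t\<in>T. w t * tnorm (d * d) (tens_id d d (\<Phi> t) X))"
    using tnorm_lin_comb_le[OF w] by simp
  also have "\<dots> \<le> (\<Sum>t\<in>T. w t * diamond d (\<Phi> t))"
    using w diamond_upper[OF lin X(1) X(2)] by (intro sum_mono mult_left_mono) auto
  finally show "tnorm (d * d) (tens_id d d (\<lambda>A i j. \<Sum>t\<in>T. complex_of_real (w t) * \<Phi> t A i j) X)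
      \<le> (\<Sum>t\<in>T. w t * diamond d (\<Phi> t))" .
qed

lemma lin_superop_id_minus: "lin_superop d \<Phi> \<Longrightarrow> lin_superop d (superop_diff id \<Phi>)"
  unfolding lin_superop_def superop_diff_def
  by (auto simp: mats_def madd_def smul_def algebra_simps intro!: ext)

section \<open>Averaged channels\<close>

definition pair_count ::
    "nat \<Rightarrow> (bool \<times> bool) list \<Rightarrow> (bool \<times> bool) list \<Rightarrow> cmat \<Rightarrow> real" where
  "pair_count n a a' g = (\<Sum>z\<in>zidx n. \<Sum>z'\<in>zidx n. if Xi n z g = a \<and> Xi n z' g = a' then 1 else 0)"

lemma pair_count_nonneg: "pair_count n a a' g \<ge> 0"
  unfolding pair_count_def by (intro sum_nonneg) auto

lemma sum_Xi_fibers_eq_pair_count: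
  fixes f :: "cmat \<Rightarrow> 'b::real_algebra_1"
  assumes fin: "finite G"
  shows "(\<Sum>z\<in>zidx n. \<Sum>z'\<in>zidx n. \<Sum>g\<in>{g\<in>G. Xi n z g = a \<and> Xi n z' g = a'}. f g) =
         (\<Sum>g\<in>G. of_real (pair_count n a a' g) * f g)"
proof -
  have "(\<Sum>z\<in>zidx n. \<Sum>z'\<in>zidx n. \<Sum>g\<in>{g\<in>G. Xi n z g = a \<and> Xi n z' g = a'}. f g) =
        (\<Sum>z\<in>zidx n. \<Sum>z'\<in>zidx n. \<Sum>g\<in>G. if Xi n z g = a \<and> Xi n z' g = a' then f g else 0)"
    using fin by (simp add: sum.inter_filter)
  also have "\<dots> = (\<Sum>g\<in>G. \<Sum>z\<in>zidx n. \<Sum>z'\<in>zidx n. if Xi n z g = a \<and> Xi n z' g = a' then f g else 0)"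
    by (subst (2) sum.swap, subst sum.swap) simp
  also have "\<dots> = (\<Sum>g\<in>G. of_real (pair_count n a a' g) * f g)"
    unfolding pair_count_def of_real_sum sum_distrib_right by (intro sum.cong refl) auto
  finally show ?thesis .
qed

lemma r2_eq_sum_pair_count: "finite G \<Longrightarrow> r2 n G p a a' = (\<Sum>g\<in>G. pair_count n a a' g * p g)"
  unfolding r2_def using sum_Xi_fibers_eq_pair_count[of G p] by simp

lemma r2_nonneg: "\<forall>g\<in>G. p g \<ge> 0 \<Longrightarrow> r2 n G p a a' \<ge> 0"
  unfolding r2_def by (intro sum_nonneg) auto

text \<open>Z_z and Z_z' commute, hence so do their conjugates +-sigma_a and +-sigma_a'; this is why
  r_{a,a'} vanishes on anticommuting pairs.\<close>

lemma pcommute_if_r2_nonzero: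
  assumes cl: "\<forall>g\<in>G. clifford n g" and r: "r2 n G p a a' \<noteq> 0"
  shows "pcommute n a a'"
proof -
  have "\<exists>z\<in>zidx n. \<exists>z'\<in>zidx n. \<exists>g\<in>G. Xi n z g = a \<and> Xi n z' g = a'"
  proof (rule ccontr)
    assume "\<not> ?thesis"
    then have "r2 n G p a a' = 0" unfolding r2_def by (intro sum.neutral ballI) auto
    with r show False by simp
  qed
  then obtain z z' g where z: "z \<in> zidx n" and z': "z' \<in> zidx n" and g: "g \<in> G"
    and xa: "Xi n z g = a" and xa': "Xi n z' g = a'"
    by blast
  have clg: "clifford n g" using cl g by blast
  have U: "unitary (2 ^ n) g" using clg by (rule clifford_unitary)
  obtain e where e: "e \<in> {1, -1}" "omega_adj (2 ^ n) g (Zop n z) = smul e (pauli n a)"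
    using Xi_pauli[OF clg z] xa by blast
  obtain e' where e': "e' \<in> {1, -1}" "omega_adj (2 ^ n) g (Zop n z') = smul e' (pauli n a')"
    using Xi_pauli[OF clg z'] xa' by blast
  have "mmul (2 ^ n) (Zop n z) (Zop n z') = mmul (2 ^ n) (Zop n z') (Zop n z)"
    using z z' by (simp add: diag_mat_commute diag_Zop zidx_def)
  then have "smul (e * e') (mmul (2 ^ n) (pauli n a) (pauli n a')) =
             smul (e * e') (mmul (2 ^ n) (pauli n a') (pauli n a))"
    using omega_adj_mmul[OF U, of "Zop n z" "Zop n z'"] omega_adj_mmul[OF U, of "Zop n z'" "Zop n z"]
    unfolding e(2) e'(2) mmul_smul_left mmul_smul_right smul_smul by (simp add: mult.commute)
  then have "smul (e * e') (smul (e * e') (mmul (2 ^ n) (pauli n a) (pauli n a'))) =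
             smul (e * e') (smul (e * e') (mmul (2 ^ n) (pauli n a') (pauli n a)))"
    by simp
  moreover have "(e * e') * (e * e') = 1" using e(1) e'(1) by auto
  ultimately show ?thesis unfolding pcommute_def smul_smul by simp
qed

lemma Lbar_eq_sum:
  assumes fin: "finite G" and r: "r2 n G p a a' \<noteq> 0" and pc: "pcommute n a a'"
  shows "Lbar n G p \<Lambda> a a' =
           (\<lambda>A i j. \<Sum>g\<in>G. complex_of_real (pair_count n a a' g * p g / r2 n G p a a') * \<Lambda> g A i j)"
proof (intro ext)
  fix A i j
  have "Lbar n G p \<Lambda> a a' A i j = complex_of_real (1 / r2 n G p a a') *
       (\<Sum>g\<in>G. complex_of_real (pair_count n a a' g) * (complex_of_real (p g) * \<Lambda> g A i j))"
    using r pc by (simp add: Lbar_def sum_Xi_fibers_eq_pair_count[OF fin])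
  also have "\<dots> = (\<Sum>g\<in>G. complex_of_real (pair_count n a a' g * p g / r2 n G p a a') * \<Lambda> g A i j)"
    by (simp add: sum_distrib_left divide_inverse mult_ac)
  finally show "Lbar n G p \<Lambda> a a' A i j =
      (\<Sum>g\<in>G. complex_of_real (pair_count n a a' g * p g / r2 n G p a a') * \<Lambda> g A i j)" .
qed

lemma id_minus_Lbar_eq_sum:
  assumes fin: "finite G" and r: "r2 n G p a a' \<noteq> 0" and pc: "pcommute n a a'"
  shows "superop_diff id (Lbar n G p \<Lambda> a a') =
     (\<lambda>A i j. \<Sum>g\<in>G. complex_of_real (pair_count n a a' g * p g / r2 n G p a a') *
                      superop_diff id (\<Lambda> g) A i j)"
proof (intro ext)
  fix A i j
  let ?w = "\<lambda>g. complex_of_real (pair_count n a a' g * p g / r2 n G p a a')"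
  have "(\<Sum>g\<in>G. ?w g) = 1"
    using r unfolding of_real_sum[symmetric] sum_divide_distrib[symmetric] r2_eq_sum_pair_count[OF fin]
    by simp
  then have "superop_diff id (Lbar n G p \<Lambda> a a') A i j =
             (\<Sum>g\<in>G. ?w g) * A i j - (\<Sum>g\<in>G. ?w g * \<Lambda> g A i j)"
    by (simp only: superop_diff_def Lbar_eq_sum[OF fin r pc] id_apply mult_1)
  also have "\<dots> = (\<Sum>g\<in>G. ?w g * superop_diff id (\<Lambda> g) A i j)"
    by (simp add: superop_diff_def sum_distrib_right right_diff_distrib sum_subtractf)
  finally show "superop_diff id (Lbar n G p \<Lambda> a a') A i j = (\<Sum>g\<in>G. ?w g * superop_diff id (\<Lambda> g) A i j)" .
qed

lemma diamond_id_minus_Lbar_nonneg: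
  assumes fin: "finite G" and ch: "\<forall>g\<in>G. quantum_channel (2 ^ n) (\<Lambda> g)"
  shows "diamond (2 ^ n) (superop_diff id (Lbar n G p \<Lambda> a a')) \<ge> 0"
proof (cases "r2 n G p a a' = 0 \<or> \<not> pcommute n a a'")
  case True
  then have "superop_diff id (Lbar n G p \<Lambda> a a') = (\<lambda>A i j. 0)"
    by (auto simp: Lbar_def superop_diff_def intro!: ext)
  then show ?thesis by (simp add: diamond_zero)
next
  case False
  then have r: "r2 n G p a a' \<noteq> 0" and pc: "pcommute n a a'" by auto
  show ?thesis
    unfolding id_minus_Lbar_eq_sum[OF fin r pc] using ch
    by (intro diamond_nonneg lin_superop_sum lin_superop_id_minus) (auto simp: quantum_channel_def)
qed

lemma diamond_id_minus_Lbar_le_Max: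
  assumes fin: "finite G" and ch: "\<forall>g\<in>G. quantum_channel (2 ^ n) (\<Lambda> g)"
    and pn: "\<forall>g\<in>G. p g \<ge> 0" and ne: "G \<noteq> {}"
  shows "diamond (2 ^ n) (superop_diff id (Lbar n G p \<Lambda> a a')) \<le>
           Max ((\<lambda>g. diamond (2 ^ n) (superop_diff id (\<Lambda> g))) ` G)"
    (is "_ \<le> ?M")
proof -
  have le: "diamond (2 ^ n) (superop_diff id (\<Lambda> g)) \<le> ?M" if "g \<in> G" for g
    using fin that by (intro Max_ge) auto
  have lin: "lin_superop (2 ^ n) (superop_diff id (\<Lambda> g))" if "g \<in> G" for g
    using ch that by (auto simp: quantum_channel_def intro: lin_superop_id_minus)
  show ?thesis
  proof (cases "r2 n G p a a' = 0 \<or> \<not> pcommute n a a'")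
    case True
    obtain g0 where g0: "g0 \<in> G" using ne by blast
    have "superop_diff id (Lbar n G p \<Lambda> a a') = (\<lambda>A i j. 0)"
      using True by (auto simp: Lbar_def superop_diff_def intro!: ext)
    then show ?thesis using diamond_nonneg[OF lin[OF g0]] le[OF g0] by (simp add: diamond_zero)
  next
    case False
    then have r: "r2 n G p a a' \<noteq> 0" and pc: "pcommute n a a'" by auto
    let ?w = "\<lambda>g. pair_count n a a' g * p g / r2 n G p a a'"
    have w0: "?w g \<ge> 0" if "g \<in> G" for g
      using that pn pair_count_nonneg r2_nonneg[OF pn] by (intro divide_nonneg_nonneg mult_nonneg_nonneg) auto
    have "diamond (2 ^ n) (superop_diff id (Lbar n G p \<Lambda> a a')) \<le>
          (\<Sum>g\<in>G. ?w g * diamond (2 ^ n) (superop_diff id (\<Lambda> g)))"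
      unfolding id_minus_Lbar_eq_sum[OF fin r pc] by (rule diamond_sum_le[OF w0 lin])
    also have "\<dots> \<le> (\<Sum>g\<in>G. ?w g) * ?M"
      unfolding sum_distrib_right using w0 le by (intro sum_mono mult_left_mono) auto
    also have "(\<Sum>g\<in>G. ?w g) = 1"
      using r by (simp add: sum_divide_distrib[symmetric] r2_eq_sum_pair_count[OF fin])
    finally show ?thesis by (simp only: mult_1)
  qed
qed

section \<open>The bias of the noisy second moment\<close>

lemma pauli_pair_tr_eq_hs: "pauli_pair_tr n a a' X = hs (2 ^ n) (adj (mmul (2 ^ n) (pauli n a) (pauli n a'))) X"
  by (simp add: pauli_pair_tr_def hs_adj_left)

lemma pauli_pair_tr_diff: "pauli_pair_tr n a a' (\<lambda>i j. A i j - B i j) = pauli_pair_tr n a a' A - pauli_pair_tr n a a' B"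
  unfolding pauli_pair_tr_def tr_def mmul_def by (simp add: sum_subtractf right_diff_distrib)

lemma pauli_pair_tr_same: "a \<in> pidx n \<Longrightarrow> X \<in> mats (2 ^ n) \<Longrightarrow> pauli_pair_tr n a a X = tr (2 ^ n) X"
  unfolding pauli_pair_tr_def by (simp add: pauli_sq pidx_def mmul_idm_left)

definition pair_bias :: "nat \<Rightarrow> cmat set \<Rightarrow> (cmat \<Rightarrow> real) \<Rightarrow> (cmat \<Rightarrow> superop) \<Rightarrow> cmat
                           \<Rightarrow> (bool \<times> bool) list \<Rightarrow> (bool \<times> bool) list \<Rightarrow> complex" where
  "pair_bias n G p \<Lambda> \<rho> a a' = (\<Sum>g\<in>G. complex_of_real (pair_count n a a' g * p g) *
       (pauli_pair_tr n a a' (\<Lambda> g \<rho>) - pauli_pair_tr n a a' \<rho>))"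

lemma sum_regroup_by_values:
  assumes fin: "finite G" "finite A" and h: "\<And>g z. g \<in> G \<Longrightarrow> z \<in> Z \<Longrightarrow> h z g \<in> A"
  shows "(\<Sum>g\<in>G. \<Sum>z\<in>Z. \<Sum>z'\<in>Z. f g (h z g) (h z' g)) =
         (\<Sum>a\<in>A. \<Sum>a'\<in>A. \<Sum>z\<in>Z. \<Sum>z'\<in>Z. \<Sum>g\<in>{g\<in>G. h z g = a \<and> h z' g = a'}. f g a a')"
proof -
  have "(\<Sum>g\<in>G. \<Sum>z\<in>Z. \<Sum>z'\<in>Z. f g (h z g) (h z' g)) = (\<Sum>z\<in>Z. \<Sum>z'\<in>Z. \<Sum>g\<in>G. f g (h z g) (h z' g))"
    by (subst sum.swap, subst (2) sum.swap) simp
  also have "\<dots> = (\<Sum>z\<in>Z. \<Sum>z'\<in>Z. \<Sum>a\<in>A. \<Sum>a'\<in>A. \<Sum>g\<in>{g\<in>G. h z g = a \<and> h z' g = a'}. f g a a')"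
  proof (intro sum.cong refl)
    fix z z' assume z: "z \<in> Z" and z': "z' \<in> Z"
    have "(\<Sum>g\<in>G. f g (h z g) (h z' g)) =
          (\<Sum>y\<in>A \<times> A. \<Sum>g\<in>{g. g \<in> G \<and> (h z g, h z' g) = y}. f g (h z g) (h z' g))"
      by (rule sum.group[symmetric]) (use fin h z z' in auto)
    also have "\<dots> = (\<Sum>(a, a')\<in>A \<times> A. \<Sum>g\<in>{g\<in>G. h z g = a \<and> h z' g = a'}. f g a a')"
      by (intro sum.cong refl) auto
    finally show "(\<Sum>g\<in>G. f g (h z g) (h z' g)) =
        (\<Sum>a\<in>A. \<Sum>a'\<in>A. \<Sum>g\<in>{g\<in>G. h z g = a \<and> h z' g = a'}. f g a a')"
      by (simp add: sum.cartesian_product)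
  qed
  also have "\<dots> = (\<Sum>a\<in>A. \<Sum>a'\<in>A. \<Sum>z\<in>Z. \<Sum>z'\<in>Z. \<Sum>g\<in>{g\<in>G. h z g = a \<and> h z' g = a'}. f g a a')"
    by (subst sum.swap, subst (2) sum.swap, subst (3) sum.swap, subst (4) sum.swap) simp
  finally show ?thesis .
qed

lemma second_moment_diff_eq:
  assumes fin: "finite G" and cl: "\<forall>g\<in>G. clifford n g" and pn: "\<forall>g\<in>G. p g \<ge> 0"
    and S: "bij_betw (Sop n G p) (mats (2 ^ n)) (mats (2 ^ n))"
  shows "second_moment n G p \<Lambda> Obs \<rho> - second_moment n G p (\<lambda>g. id) Obs \<rho> =
    (\<Sum>a\<in>pidx n. \<Sum>a'\<in>pidx n. shadow_coeff n G p Obs a * shadow_coeff n G p Obs a' * pair_bias n G p \<Lambda> \<rho> a a')"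
proof -
  let ?F = "shadow_coeff n G p Obs" and ?T = "pauli_pair_tr n"
  define f where "f g a a' = complex_of_real (p g) * (?F a * ?F a' * (?T a a' (\<Lambda> g \<rho>) - ?T a a' \<rho>))" for g a a'
  have "second_moment n G p \<Lambda> Obs \<rho> - second_moment n G p (\<lambda>g. id) Obs \<rho> =
        (\<Sum>g\<in>G. \<Sum>z\<in>zidx n. \<Sum>z'\<in>zidx n. f g (Xi n z g) (Xi n z' g))"
    unfolding second_moment_eq[OF fin cl pn S] f_def
    by (simp add: sum_subtractf[symmetric] right_diff_distrib sum_distrib_left)
  also have "\<dots> = (\<Sum>a\<in>pidx n. \<Sum>a'\<in>pidx n. \<Sum>z\<in>zidx n. \<Sum>z'\<in>zidx n.
                      \<Sum>g\<in>{g\<in>G. Xi n z g = a \<and> Xi n z' g = a'}. f g a a')"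
    using cl Xi_pauli by (intro sum_regroup_by_values fin finite_pidx) blast
  also have "\<dots> = (\<Sum>a\<in>pidx n. \<Sum>a'\<in>pidx n. ?F a * ?F a' * pair_bias n G p \<Lambda> \<rho> a a')"
    unfolding sum_Xi_fibers_eq_pair_count[OF fin] pair_bias_def f_def
    by (simp add: sum_distrib_left mult_ac)
  finally show ?thesis .
qed

lemma pair_bias_same:
  assumes fin: "finite G" and ch: "\<forall>g\<in>G. quantum_channel (2 ^ n) (\<Lambda> g)"
    and a: "a \<in> pidx n" and R: "\<rho> \<in> mats (2 ^ n)"
  shows "pair_bias n G p \<Lambda> \<rho> a a = 0"
proof -
  have "pauli_pair_tr n a a (\<Lambda> g \<rho>) = pauli_pair_tr n a a \<rho>" if "g \<in> G" for g
    using ch that R by (simp add: pauli_pair_tr_same[OF a] quantum_channel_def lin_superop_def trace_preserving_def)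
  then show ?thesis unfolding pair_bias_def by simp
qed

lemma pair_bias_eq:
  assumes fin: "finite G" and r: "r2 n G p a a' \<noteq> 0" and pc: "pcommute n a a'"
  shows "pair_bias n G p \<Lambda> \<rho> a a' = - complex_of_real (r2 n G p a a') *
           hs (2 ^ n) (adj (mmul (2 ^ n) (pauli n a) (pauli n a'))) (superop_diff id (Lbar n G p \<Lambda> a a') \<rho>)"
proof -
  let ?T = "pauli_pair_tr n a a'"
  define w where "w g = complex_of_real (pair_count n a a' g * p g / r2 n G p a a')" for g
  have "superop_diff id (Lbar n G p \<Lambda> a a') \<rho> = lin_comb G w (\<lambda>g. \<lambda>i j. \<rho> i j - \<Lambda> g \<rho> i j)"
    unfolding id_minus_Lbar_eq_sum[OF fin r pc] unfolding lin_comb_def superop_diff_def w_def by simp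
  then have hs: "hs (2 ^ n) (adj (mmul (2 ^ n) (pauli n a) (pauli n a'))) (superop_diff id (Lbar n G p \<Lambda> a a') \<rho>) =
             (\<Sum>g\<in>G. w g * (?T \<rho> - ?T (\<Lambda> g \<rho>)))"
    by (simp add: hs_lin_comb pauli_pair_tr_eq_hs[symmetric] pauli_pair_tr_diff)
  have "complex_of_real (pair_count n a a' g * p g) = complex_of_real (r2 n G p a a') * w g" for g
  proof -
    have "pair_count n a a' g * p g = r2 n G p a a' * (pair_count n a a' g * p g / r2 n G p a a')"
      using r by simp
    then show ?thesis unfolding w_def by (metis of_real_mult)
  qed
  then have "pair_bias n G p \<Lambda> \<rho> a a' =
        (\<Sum>g\<in>G. complex_of_real (r2 n G p a a') * w g * (?T (\<Lambda> g \<rho>) - ?T \<rho>))"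
    by (simp only: pair_bias_def)
  also have "\<dots> = - complex_of_real (r2 n G p a a') *
      hs (2 ^ n) (adj (mmul (2 ^ n) (pauli n a) (pauli n a'))) (superop_diff id (Lbar n G p \<Lambda> a a') \<rho>)"
    unfolding hs sum_distrib_left by (intro sum.cong refl) (simp add: algebra_simps)
  finally show ?thesis .
qed

lemma cmod_pair_bias_le:
  assumes fin: "finite G" and cl: "\<forall>g\<in>G. clifford n g" and pn: "\<forall>g\<in>G. p g \<ge> 0"
    and ch: "\<forall>g\<in>G. quantum_channel (2 ^ n) (\<Lambda> g)" and R: "is_state (2 ^ n) \<rho>"
    and a: "a \<in> pidx n" and a': "a' \<in> pidx n"
  shows "cmod (pair_bias n G p \<Lambda> \<rho> a a') \<le> r2 n G p a a' * diamond (2 ^ n) (superop_diff id (Lbar n G p \<Lambda> a a'))"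
proof (cases "r2 n G p a a' = 0")
  case True
  then have "\<forall>g\<in>G. pair_count n a a' g * p g = 0"
    using fin pn pair_count_nonneg by (simp add: r2_eq_sum_pair_count sum_nonneg_eq_0_iff)
  then show ?thesis using True by (auto simp: pair_bias_def intro!: sum.neutral)
next
  case False
  have pc: "pcommute n a a'" by (rule pcommute_if_r2_nonzero[OF cl False])
  have U: "unitary (2 ^ n) (adj (mmul (2 ^ n) (pauli n a) (pauli n a')))"
    using a a' by (intro unitary_adj unitary_mmul pauli_unitary) (auto simp: pidx_def)
  have lin: "lin_superop (2 ^ n) (superop_diff id (Lbar n G p \<Lambda> a a'))"
    unfolding id_minus_Lbar_eq_sum[OF fin False pc] using ch
    by (intro lin_superop_sum lin_superop_id_minus) (auto simp: quantum_channel_def)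
  have "cmod (hs (2 ^ n) (adj (mmul (2 ^ n) (pauli n a) (pauli n a'))) (superop_diff id (Lbar n G p \<Lambda> a a') \<rho>))
        \<le> diamond (2 ^ n) (superop_diff id (Lbar n G p \<Lambda> a a'))"
    using U R by (intro cmod_hs_state_le_diamond[OF lin] unitary_opnorm) (auto simp: unitary_def is_state_def)
  then show ?thesis
    using r2_nonneg[OF pn] by (simp add: pair_bias_eq[OF fin False pc] norm_mult mult_left_mono)
qed

lemma sum_mult_sum_scaled:
  fixes f :: "'a \<Rightarrow> real"
  shows "(\<Sum>a\<in>A. \<Sum>b\<in>A. f a * f b / q * K) = (\<Sum>a\<in>A. f a)\<^sup>2 / q * K"
proof -
  have "(\<Sum>a\<in>A. f a)\<^sup>2 / q * K = (\<Sum>a\<in>A. \<Sum>b\<in>A. f a * f b) / q * K"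
    by (simp add: power2_eq_square sum_product)
  then show ?thesis by (simp add: sum_divide_distrib sum_distrib_right)
qed

lemma cmod_shadow_coeff:
  "s1 n G p a > 0 \<Longrightarrow> cmod (shadow_coeff n G p Obs a) = cmod (hs (2 ^ n) Obs (pauli n a)) / (2 ^ n * s1 n G p a)"
  by (simp add: shadow_coeff_def norm_divide norm_mult norm_power)

lemma cmod_pair_term_le:
  assumes fin: "finite G" and cl: "\<forall>g\<in>G. clifford n g" and pn: "\<forall>g\<in>G. p g \<ge> 0"
    and S: "bij_betw (Sop n G p) (mats (2 ^ n)) (mats (2 ^ n))"
    and ch: "\<forall>g\<in>G. quantum_channel (2 ^ n) (\<Lambda> g)" and R: "is_state (2 ^ n) \<rho>"
    and C0: "0 \<le> C"
    and Cb: "\<forall>a\<in>pidx n. \<forall>a'\<in>pidx n. a \<noteq> a' \<and> hs (2 ^ n) Obs (pauli n a) \<noteq> 0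
                     \<and> hs (2 ^ n) Obs (pauli n a') \<noteq> 0
                  \<longrightarrow> \<bar>s2 n G p a a'\<bar> / (s1 n G p a * s1 n G p a') \<le> C"
    and a: "a \<in> pidx n" and a': "a' \<in> pidx n"
    and Dm: "diamond (2 ^ n) (superop_diff id (Lbar n G p \<Lambda> a a')) \<le> Dmax" and D0: "0 \<le> Dmax"
  shows "cmod (shadow_coeff n G p Obs a * shadow_coeff n G p Obs a' * pair_bias n G p \<Lambda> \<rho> a a') \<le>
         cmod (hs (2 ^ n) Obs (pauli n a)) * cmod (hs (2 ^ n) Obs (pauli n a')) / (2 ^ n)\<^sup>2 * (C * Dmax)"
proof (cases "a = a' \<or> hs (2 ^ n) Obs (pauli n a) = 0 \<or> hs (2 ^ n) Obs (pauli n a') = 0")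
  case True
  moreover have "\<rho> \<in> mats (2 ^ n)" using R by (simp add: is_state_def psd_def)
  ultimately have "shadow_coeff n G p Obs a * shadow_coeff n G p Obs a' * pair_bias n G p \<Lambda> \<rho> a a' = 0"
    using pair_bias_same[OF fin ch a] by (auto simp: shadow_coeff_def)
  then have "cmod (shadow_coeff n G p Obs a * shadow_coeff n G p Obs a' * pair_bias n G p \<Lambda> \<rho> a a') = 0"
    by (simp only: norm_zero)
  moreover have "0 \<le> cmod (hs (2 ^ n) Obs (pauli n a)) * cmod (hs (2 ^ n) Obs (pauli n a')) / (2 ^ n)\<^sup>2 * (C * Dmax)"
    using C0 D0 by simp
  ultimately show ?thesis by linarith
next
  case False
  let ?ha = "cmod (hs (2 ^ n) Obs (pauli n a))" and ?hb = "cmod (hs (2 ^ n) Obs (pauli n a'))"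
  let ?r = "r2 n G p a a'" and ?s = "s1 n G p a * s1 n G p a'"
  have s: "s1 n G p a > 0" "s1 n G p a' > 0" using s1_pos[OF fin cl pn S] a a' by auto
  have "?r / ?s = \<bar>s2 n G p a a'\<bar> / ?s"
    using r2_nonneg[OF pn] by (simp add: s2_def abs_mult beta_sign_def)
  also have "\<dots> \<le> C" using Cb a a' False by blast
  finally have rC: "?r / ?s \<le> C" .
  have "cmod (shadow_coeff n G p Obs a * shadow_coeff n G p Obs a' * pair_bias n G p \<Lambda> \<rho> a a') =
        ?ha * ?hb / (2 ^ n)\<^sup>2 * (cmod (pair_bias n G p \<Lambda> \<rho> a a') / ?s)"
    using s by (simp add: norm_mult cmod_shadow_coeff power2_eq_square)
  also have "\<dots> \<le> ?ha * ?hb / (2 ^ n)\<^sup>2 * (?r * diamond (2 ^ n) (superop_diff id (Lbar n G p \<Lambda> a a')) / ?s)"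
    using cmod_pair_bias_le[OF fin cl pn ch R a a'] s by (intro mult_left_mono divide_right_mono) auto
  also have "\<dots> = ?ha * ?hb / (2 ^ n)\<^sup>2 * (?r / ?s * diamond (2 ^ n) (superop_diff id (Lbar n G p \<Lambda> a a')))"
    by simp
  also have "\<dots> \<le> ?ha * ?hb / (2 ^ n)\<^sup>2 * (C * Dmax)"
    using rC Dm C0 s r2_nonneg[OF pn] diamond_id_minus_Lbar_nonneg[OF fin ch]
    by (intro mult_left_mono mult_mono) auto
  finally show ?thesis .
qed

lemma cmod_second_moment_diff_le:
  assumes fin: "finite G" and cl: "\<forall>g\<in>G. clifford n g" and pn: "\<forall>g\<in>G. p g \<ge> 0"
    and S: "bij_betw (Sop n G p) (mats (2 ^ n)) (mats (2 ^ n))"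
    and ch: "\<forall>g\<in>G. quantum_channel (2 ^ n) (\<Lambda> g)" and R: "is_state (2 ^ n) \<rho>"
    and C0: "0 \<le> C"
    and Cb: "\<forall>a\<in>pidx n. \<forall>a'\<in>pidx n. a \<noteq> a' \<and> hs (2 ^ n) Obs (pauli n a) \<noteq> 0
                     \<and> hs (2 ^ n) Obs (pauli n a') \<noteq> 0
                  \<longrightarrow> \<bar>s2 n G p a a'\<bar> / (s1 n G p a * s1 n G p a') \<le> C"
  shows "cmod (second_moment n G p \<Lambda> Obs \<rho> - second_moment n G p (\<lambda>g. id) Obs \<rho>)
           \<le> C * (stab_norm n Obs)\<^sup>2 *
              Max ((\<lambda>(a, b). diamond (2 ^ n) (superop_diff id (Lbar n G p \<Lambda> a b))) ` (pidx n \<times> pidx n))"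
    (is "_ \<le> _ * ?DL")
proof -
  let ?h = "\<lambda>a. cmod (hs (2 ^ n) Obs (pauli n a))"
  have DL: "diamond (2 ^ n) (superop_diff id (Lbar n G p \<Lambda> a a')) \<le> ?DL"
    if "a \<in> pidx n" "a' \<in> pidx n" for a a'
    using that finite_pidx by (intro Max_ge) auto
  obtain a0 where "a0 \<in> pidx n" using pidx_nonempty by blast
  then have DL0: "0 \<le> ?DL" using DL diamond_id_minus_Lbar_nonneg[OF fin ch] by (meson order_trans)
  have "cmod (second_moment n G p \<Lambda> Obs \<rho> - second_moment n G p (\<lambda>g. id) Obs \<rho>) \<le>
        (\<Sum>a\<in>pidx n. \<Sum>a'\<in>pidx n. ?h a * ?h a' / (2 ^ n)\<^sup>2 * (C * ?DL))"
    unfolding second_moment_diff_eq[OF fin cl pn S]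
    by (intro order_trans[OF norm_sum sum_mono] order_trans[OF norm_sum sum_mono]
        cmod_pair_term_le[OF fin cl pn S ch R C0 Cb] DL DL0)
  also have "\<dots> = C * ((\<Sum>a\<in>pidx n. ?h a) / 2 ^ n)\<^sup>2 * ?DL"
    by (simp only: sum_mult_sum_scaled) (simp add: power_divide)
  also have "(\<Sum>a\<in>pidx n. ?h a) / 2 ^ n = stab_norm n Obs"
    unfolding stab_norm_def by (simp add: hs_swap[of _ Obs])
  finally show ?thesis .
qed

lemma Max_diamond_Lbar_le:
  assumes fin: "finite G" and ch: "\<forall>g\<in>G. quantum_channel (2 ^ n) (\<Lambda> g)"
    and pn: "\<forall>g\<in>G. p g \<ge> 0" and ne: "G \<noteq> {}"
  shows "Max ((\<lambda>(a, b). diamond (2 ^ n) (superop_diff id (Lbar n G p \<Lambda> a b))) ` (pidx n \<times> pidx n))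
           \<le> Max ((\<lambda>g. diamond (2 ^ n) (superop_diff id (\<Lambda> g))) ` G)"
  using finite_pidx pidx_nonempty diamond_id_minus_Lbar_le_Max[OF fin ch pn ne]
  by (intro Max.boundedI) auto

theorem proposition5:
  fixes n :: nat and G :: "cmat set" and p :: "cmat \<Rightarrow> real"
    and \<Lambda> :: "cmat \<Rightarrow> superop" and Obs \<rho> :: cmat and C :: real
  assumes G_fin: "finite G"
    and G_cliff: "\<forall>g\<in>G. clifford n g"
    and p_nonneg: "\<forall>g\<in>G. p g \<ge> 0"
    and p_sum: "(\<Sum>g\<in>G. p g) = 1"
    and S_inv: "bij_betw (Sop n G p) (mats (2 ^ n)) (mats (2 ^ n))"
    and channels: "\<forall>g\<in>G. quantum_channel (2 ^ n) (\<Lambda> g)"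
    and O_herm: "hermitian (2 ^ n) Obs"
    and rho_state: "is_state (2 ^ n) \<rho>"
    and C_nonneg: "0 \<le> C"
    and C_bound: "\<forall>a\<in>pidx n. \<forall>a'\<in>pidx n. a \<noteq> a' \<and> hs (2 ^ n) Obs (pauli n a) \<noteq> 0
                     \<and> hs (2 ^ n) Obs (pauli n a') \<noteq> 0
                  \<longrightarrow> \<bar>s2 n G p a a'\<bar> / (s1 n G p a * s1 n G p a') \<le> C"
  shows "cmod (second_moment n G p \<Lambda> Obs \<rho> - second_moment n G p (\<lambda>g. id) Obs \<rho>)
           \<le> C * (stab_norm n Obs)\<^sup>2 *
              Max ((\<lambda>(a, b). diamond (2 ^ n) (superop_diff id (Lbar n G p \<Lambda> a b))) ` (pidx n \<times> pidx n))
       \<and> C * (stab_norm n Obs)\<^sup>2 *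
              Max ((\<lambda>(a, b). diamond (2 ^ n) (superop_diff id (Lbar n G p \<Lambda> a b))) ` (pidx n \<times> pidx n))
           \<le> C * (stab_norm n Obs)\<^sup>2 * Max ((\<lambda>g. diamond (2 ^ n) (superop_diff id (\<Lambda> g))) ` G)"
proof -
  have "G \<noteq> {}" using p_sum by auto
  then have "Max ((\<lambda>(a, b). diamond (2 ^ n) (superop_diff id (Lbar n G p \<Lambda> a b))) ` (pidx n \<times> pidx n))
               \<le> Max ((\<lambda>g. diamond (2 ^ n) (superop_diff id (\<Lambda> g))) ` G)"
    by (rule Max_diamond_Lbar_le[OF G_fin channels p_nonneg])
  then show ?thesis
    using cmod_second_moment_diff_le[OF G_fin G_cliff p_nonneg S_inv channels rho_state C_nonneg C_bound]
      C_nonneg by (simp add: mult_left_mono)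
qed

end
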